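(* For every $0\le r\le\min\{m,n\}$, \[SF_r=\sum_{d=0}^{r}\{SF_d-SF_{d-1}\}_{\lambda_1\le n+m-d-r},\] with the convention $SF_{-1}=0$.
   Context: Fix positive integers $n,m$. $\Lambda$ is the ring of symmetric functions with Schur functions $s_\lambda$ and complete homogeneous functions $h_k$. For $0\le d\le\min\{m,n\}$, $SF_d:=\sum_{\mu\vdash d}(s_\mu h_{n-d})\otimes(s_\mu h_{m-d})\in\Lambda\otimes\Lambda$. For $F=\sum_{\lambda,\mu}c_{\lambda,\mu}s_\lambda\otimes s_\mu$ and an integer $L$, the truncation $\{F\}_{\lambda_1\le L}:=\sum_{\lambda_1\le L,\ \mu_1\le L}c_{\lambda,\mu}s_\lambda\otimes s_\mu$ (both partitions must satisfy the bound). *)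

theory Defs
  imports Main "HOL-Library.Poly_Mapping" "HOL-Library.Function_Algebras"
begin

text \<open>Symmetric functions in countably many variables x_0, x_1, ... are represented
  by their coefficient functions on monomials (exponent vectors with finite support).
  Lambda tensor Lambda is represented faithfully inside series in two independent
  variable sets x and y: a coefficient function on pairs of monomials.\<close>

type_synonym mono = "nat \<Rightarrow>\<^sub>0 nat"
type_synonym sfun = "mono \<Rightarrow> int"
type_synonym sfun2 = "mono \<times> mono \<Rightarrow> int"

definition sf_mult :: "sfun \<Rightarrow> sfun \<Rightarrow> sfun" where
  "sf_mult f g = (\<lambda>\<gamma>. \<Sum>p\<in>{p. fst p + snd p = \<gamma>}. f (fst p) * g (snd p))"

definition sf_tensor :: "sfun \<Rightarrow> sfun \<Rightarrow> sfun2" where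
  "sf_tensor f g = (\<lambda>(a, b). f a * g b)"

definition is_partition :: "nat list \<Rightarrow> bool" where
  "is_partition la \<longleftrightarrow> sorted_wrt (\<ge>) la \<and> 0 \<notin> set la"

definition partitions_of :: "nat \<Rightarrow> nat list set" where
  "partitions_of d = {la. is_partition la \<and> sum_list la = d}"

definition first_part :: "nat list \<Rightarrow> nat" where
  "first_part la = (case la of [] \<Rightarrow> 0 | x # _ \<Rightarrow> x)"

definition cells :: "nat list \<Rightarrow> (nat \<times> nat) set" where
  "cells la = {(i, j). i < length la \<and> j < la ! i}"

definition is_ssyt :: "nat list \<Rightarrow> (nat \<times> nat \<Rightarrow> nat) \<Rightarrow> bool" where
  "is_ssyt la T \<longleftrightarrow>
     (\<forall>i j. (i, j) \<in> cells la \<and> (i, Suc j) \<in> cells la \<longrightarrow> T (i, j) \<le> T (i, Suc j)) \<and>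
     (\<forall>i j. (i, j) \<in> cells la \<and> (Suc i, j) \<in> cells la \<longrightarrow> T (i, j) < T (Suc i, j)) \<and>
     (\<forall>c. c \<notin> cells la \<longrightarrow> T c = 0)"

definition schur :: "nat list \<Rightarrow> sfun" where
  "schur la = (\<lambda>\<alpha>. int (card {T. is_ssyt la T \<and>
       (\<forall>k. card {c \<in> cells la. T c = k} = Poly_Mapping.lookup \<alpha> k)}))"

definition hcomp :: "nat \<Rightarrow> sfun" where
  "hcomp k = (\<lambda>\<alpha>. if sum (Poly_Mapping.lookup \<alpha>) (Poly_Mapping.keys \<alpha>) = k then 1 else 0)"

definition SF :: "nat \<Rightarrow> nat \<Rightarrow> nat \<Rightarrow> sfun2" where
  "SF n m d = (\<Sum>mu\<in>partitions_of d.
      sf_tensor (sf_mult (schur mu) (hcomp (n - d))) (sf_mult (schur mu) (hcomp (m - d))))"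

definition schur_expand :: "(nat list \<times> nat list \<Rightarrow> int) \<Rightarrow> sfun2" where
  "schur_expand c = (\<Sum>p\<in>{p. c p \<noteq> 0}.
      (\<lambda>x. c p * sf_tensor (schur (fst p)) (schur (snd p)) x))"

definition schur_coeffs :: "sfun2 \<Rightarrow> (nat list \<times> nat list \<Rightarrow> int)" where
  "schur_coeffs F = (THE c. finite {p. c p \<noteq> 0} \<and>
      (\<forall>p. c p \<noteq> 0 \<longrightarrow> is_partition (fst p) \<and> is_partition (snd p)) \<and>
      F = schur_expand c)"

definition trunc :: "nat \<Rightarrow> sfun2 \<Rightarrow> sfun2" where
  "trunc L F = schur_expand (\<lambda>p. if first_part (fst p) \<le> L \<and> first_part (snd p) \<le> L
                                  then schur_coeffs F p else 0)"

end

theory Submission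
  imports Defs
begin

(*
  Both sides are compared coefficientwise in the basis s_la \<otimes> s_nu of Lambda \<otimes> Lambda,
  which is linearly independent because Schur functions are unitriangular with respect to the
  dominance order. By the Pieri rule, the coefficient of s_la \<otimes> s_nu in SF_d is the number c(d)
  of partitions mu of d such that la/mu and nu/mu are both horizontal strips. These mu are the
  integer points with coordinate sum d of a box determined by la and nu, and reflecting the box
  shows c(d) = c(S - d), and c(d) = 0 for d > S, where S = n + m - max(la_1, nu_1). The truncation
  keeps the d-th difference c(d) - c(d - 1) exactly when max(la_1, nu_1) <= n + m - d - r, so the
  right-hand side telescopes to c(r), with the symmetry accounting for the dropped differences.
  The Pieri rule itself is proved on tableaux, by induction on the largest entry.
*)

section \<open>Partitions\<close>

definition part :: "nat list \<Rightarrow> nat \<Rightarrow> nat" where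
  "part la i = (if i < length la then la ! i else 0)"

definition partition_of_fun :: "(nat \<Rightarrow> nat) \<Rightarrow> nat list" where
  "partition_of_fun f = map f [0..<(LEAST i. f i = 0)]"

lemma part_eq_0: "length la \<le> i \<Longrightarrow> part la i = 0"
  by (simp add: part_def)

lemma part_pos_iff:
  assumes "is_partition la"
  shows "0 < part la i \<longleftrightarrow> i < length la"
proof
  show "i < length la \<Longrightarrow> 0 < part la i"
    using assms unfolding is_partition_def part_def by (metis gr0I nth_mem)
qed (simp add: part_def split: if_splits)

lemma part_antimono: "is_partition la \<Longrightarrow> i \<le> j \<Longrightarrow> part la j \<le> part la i"
  unfolding is_partition_def part_def
  by (auto simp: sorted_wrt_iff_nth_less dest: le_neq_implies_less)

lemma part_0_le_sum_list: "part la 0 \<le> sum_list la"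
  by (cases la) (auto simp: part_def)

lemma first_part_eq_part: "first_part la = part la 0"
  by (cases la) (auto simp: first_part_def part_def)

lemma partition_eqI:
  assumes "is_partition la" "is_partition mu" "\<And>i. part la i = part mu i"
  shows "la = mu"
proof -
  have "length la = length mu"
  proof (rule ccontr)
    assume "length la \<noteq> length mu"
    then have "(0 < part la (min (length la) (length mu))) \<noteq> (0 < part mu (min (length la) (length mu)))"
      using part_pos_iff[OF assms(1)] part_pos_iff[OF assms(2)] by (simp add: min_def)
    then show False using assms(3) by simp
  qed
  then show ?thesis using assms(3) unfolding part_def by (metis nth_equalityI)
qed

lemma
  assumes "\<And>i. f (Suc i) \<le> f i" and "f L = 0"
  shows is_partition_partition_of_fun: "is_partition (partition_of_fun f)"
    and part_partition_of_fun: "part (partition_of_fun f) = f"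
proof -
  define K where "K = (LEAST i. f i = 0)"
  have "f K = 0" unfolding K_def by (rule LeastI[of _ L]) (rule assms(2))
  moreover have antimono: "i \<le> j \<Longrightarrow> f j \<le> f i" for i j
    using assms(1) by (simp add: antimono_iff_le_Suc antimonoD)
  ultimately have "K \<le> i \<Longrightarrow> f i = 0" for i by (metis le_zero_eq)
  then have "part (partition_of_fun f) i = f i" for i
    unfolding part_def partition_of_fun_def K_def[symmetric] by auto
  then show "part (partition_of_fun f) = f" ..
  have "i < K \<Longrightarrow> f i \<noteq> 0" for i unfolding K_def using not_less_Least by blast
  then show "is_partition (partition_of_fun f)"
    unfolding is_partition_def partition_of_fun_def K_def[symmetric]
    using antimono by (auto simp: sorted_wrt_iff_nth_less) (metis neq0_conv)
qed

lemma partition_of_fun_part: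
  assumes "is_partition la"
  shows "partition_of_fun (part la) = la"
proof -
  have "part la (Suc i) \<le> part la i" for i by (simp add: assms part_antimono)
  moreover have "part la (length la) = 0" by (simp add: part_eq_0)
  ultimately show ?thesis
    using partition_eqI[OF is_partition_partition_of_fun assms] part_partition_of_fun by simp
qed

lemma sum_list_eq_sum_part:
  assumes "length la \<le> L"
  shows "sum_list la = (\<Sum>i<L. part la i)"
proof -
  have "sum_list la = (\<Sum>i<length la. part la i)"
    by (simp add: sum_list_sum_nth atLeast0LessThan part_def)
  also have "\<dots> = (\<Sum>i<L. part la i)"
    by (rule sum.mono_neutral_left) (use assms in \<open>auto simp: part_def\<close>)
  finally show ?thesis .
qed

lemma length_le_sum_list: "is_partition la \<Longrightarrow> length la \<le> sum_list la"
proof (induction la)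
  case (Cons a la)
  then have "is_partition la" "0 < a" unfolding is_partition_def by auto
  with Cons show ?case by simp
qed simp

lemma finite_partitions_of: "finite (partitions_of d)"
proof -
  have "partitions_of d \<subseteq> {xs. set xs \<subseteq> {..d} \<and> length xs \<le> d}"
    unfolding partitions_of_def using length_le_sum_list
    by (auto simp: member_le_sum_list)
  then show ?thesis using finite_lists_length_le[of "{..d}" d] finite_subset by blast
qed

lemma cells_eq_part: "cells la = {(i, j). j < part la i}"
  unfolding cells_def part_def by (auto split: if_splits)

lemma cells_eq_Sigma: "cells la = Sigma {..<length la} (\<lambda>i. {..<la ! i})"
  unfolding cells_def by auto

lemma finite_cells: "finite (cells la)"
  unfolding cells_eq_Sigma by auto

lemma card_cells: "card (cells la) = sum_list la"
  unfolding cells_eq_Sigma by (simp add: card_SigmaI sum_list_sum_nth atLeast0LessThan)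

lemma cells_upper_row:
  assumes "is_partition la" "(Suc i, j) \<in> cells la"
  shows "(i, j) \<in> cells la"
  using assms part_antimono[OF assms(1), of i "Suc i"] unfolding cells_eq_part by auto

lemma partition_eq_if_cells_eq:
  assumes "is_partition la" "is_partition mu" "cells la = cells mu"
  shows "la = mu"
proof (rule partition_eqI[OF assms(1,2)])
  fix i
  have "{j. (i, j) \<in> cells la} = {..<part la i}" "{j. (i, j) \<in> cells mu} = {..<part mu i}"
    unfolding cells_eq_part by auto
  then show "part la i = part mu i" using assms(3) by (metis card_lessThan)
qed

definition horizontal_strip :: "nat list \<Rightarrow> nat list \<Rightarrow> bool" where
  "horizontal_strip la mu \<longleftrightarrow> (\<forall>i. part mu i \<le> part la i \<and> part la (Suc i) \<le> part mu i)"

lemma horizontal_strip_cells: "horizontal_strip la mu \<Longrightarrow> cells mu \<subseteq> cells la"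
  unfolding horizontal_strip_def cells_eq_part by (auto intro: less_le_trans)

lemma horizontal_strip_length:
  assumes "is_partition mu" "horizontal_strip la mu"
  shows "length mu \<le> length la"
proof -
  have "part mu (length la) \<le> part la (length la)"
    using assms(2) by (simp add: horizontal_strip_def)
  then have "part mu (length la) = 0" by (simp add: part_eq_0)
  then show ?thesis using part_pos_iff[OF assms(1), of "length la"] by simp
qed

lemma horizontal_strip_length_Suc:
  assumes "is_partition la" "horizontal_strip la mu"
  shows "length la \<le> Suc (length mu)"
proof -
  have "part la (Suc (length mu)) \<le> part mu (length mu)"
    using assms(2) by (simp add: horizontal_strip_def)
  then have "part la (Suc (length mu)) = 0" by (simp add: part_eq_0)
  then show ?thesis using part_pos_iff[OF assms(1), of "Suc (length mu)"] by simp
qed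

lemma horizontal_strip_sum_list_le:
  assumes "is_partition mu" "horizontal_strip la mu"
  shows "sum_list mu \<le> sum_list la"
proof -
  have "sum_list mu = (\<Sum>i<length la. part mu i)"
    using sum_list_eq_sum_part horizontal_strip_length[OF assms] by blast
  also have "\<dots> \<le> (\<Sum>i<length la. part la i)"
    using assms(2) by (intro sum_mono) (simp add: horizontal_strip_def)
  also have "\<dots> = sum_list la" using sum_list_eq_sum_part[of la "length la"] by simp
  finally show ?thesis .
qed

section \<open>Common horizontal substrips\<close>

definition box :: "(nat \<Rightarrow> nat) \<Rightarrow> (nat \<Rightarrow> nat) \<Rightarrow> (nat \<Rightarrow> nat) set" where
  "box A B = {f. \<forall>i. A i \<le> f i \<and> f i \<le> B i}"

definition box_reflect :: "(nat \<Rightarrow> nat) \<Rightarrow> (nat \<Rightarrow> nat) \<Rightarrow> (nat \<Rightarrow> nat) \<Rightarrow> nat \<Rightarrow> nat" where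
  "box_reflect A B f i = A i + B i - f i"

lemma in_boxD: "f \<in> box A B \<Longrightarrow> A i \<le> f i \<and> f i \<le> B i"
  by (simp add: box_def)

lemma box_reflect_in_box:
  assumes "f \<in> box A B"
  shows "box_reflect A B f \<in> box A B"
  unfolding box_def
proof (intro CollectI allI)
  fix i show "A i \<le> box_reflect A B f i \<and> box_reflect A B f i \<le> B i"
    using in_boxD[OF assms, of i] unfolding box_reflect_def by linarith
qed

lemma box_reflect_box_reflect: "f \<in> box A B \<Longrightarrow> box_reflect A B (box_reflect A B f) = f"
proof
  fix i assume "f \<in> box A B"
  then show "box_reflect A B (box_reflect A B f) i = f i"
    using in_boxD[of f A B i] unfolding box_reflect_def by simp
qed

lemma sum_box_reflect:
  assumes "f \<in> box A B"
  shows "(\<Sum>i<L. box_reflect A B f i) + (\<Sum>i<L. f i) = (\<Sum>i<L. A i + B i)"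
  unfolding sum.distrib[symmetric]
proof (rule sum.cong)
  fix i show "box_reflect A B f i + f i = A i + B i"
    using in_boxD[OF assms, of i] unfolding box_reflect_def by simp
qed simp

lemma card_box_sum_reflect:
  assumes "d \<le> (\<Sum>i<L. A i + B i)"
  shows "card {f \<in> box A B. (\<Sum>i<L. f i) = d}
       = card {f \<in> box A B. (\<Sum>i<L. f i) = (\<Sum>i<L. A i + B i) - d}"
proof (rule bij_betw_same_card[of "box_reflect A B"],
    rule bij_betw_byWitness[where f' = "box_reflect A B"])
  have reflect_sum: "(\<Sum>i<L. box_reflect A B f i) = (\<Sum>i<L. A i + B i) - (\<Sum>i<L. f i)"
    if "f \<in> box A B" for f
    using sum_box_reflect[OF that, of L] by simp
  show "box_reflect A B ` {f \<in> box A B. (\<Sum>i<L. f i) = d}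
      \<subseteq> {f \<in> box A B. (\<Sum>i<L. f i) = (\<Sum>i<L. A i + B i) - d}"
    using box_reflect_in_box reflect_sum by (auto simp del: sum.distrib)
  show "box_reflect A B ` {f \<in> box A B. (\<Sum>i<L. f i) = (\<Sum>i<L. A i + B i) - d}
      \<subseteq> {f \<in> box A B. (\<Sum>i<L. f i) = d}"
    using box_reflect_in_box reflect_sum assms by (auto simp del: sum.distrib)
qed (auto simp: box_reflect_box_reflect)

definition interlace_lower :: "nat list \<Rightarrow> nat list \<Rightarrow> nat \<Rightarrow> nat" where
  "interlace_lower la nu i = max (part la (Suc i)) (part nu (Suc i))"

definition interlace_upper :: "nat list \<Rightarrow> nat list \<Rightarrow> nat \<Rightarrow> nat" where
  "interlace_upper la nu i = min (part la i) (part nu i)"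

abbreviation interlace_box :: "nat list \<Rightarrow> nat list \<Rightarrow> (nat \<Rightarrow> nat) set" where
  "interlace_box la nu \<equiv> box (interlace_lower la nu) (interlace_upper la nu)"

definition common_strip_count :: "nat list \<Rightarrow> nat list \<Rightarrow> nat \<Rightarrow> nat" where
  "common_strip_count la nu d =
     card {mu \<in> partitions_of d. horizontal_strip la mu \<and> horizontal_strip nu mu}"

lemma horizontal_strips_iff_interlace_box:
  "horizontal_strip la mu \<and> horizontal_strip nu mu \<longleftrightarrow> part mu \<in> interlace_box la nu"
  unfolding horizontal_strip_def box_def interlace_lower_def interlace_upper_def by auto

lemma
  assumes "is_partition la" "f \<in> interlace_box la nu"
  shows is_partition_of_interlace_box: "is_partition (partition_of_fun f)"
    and part_of_interlace_box: "part (partition_of_fun f) = f"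
proof -
  have "f (Suc i) \<le> f i" for i
  proof -
    have "f (Suc i) \<le> interlace_upper la nu (Suc i)" using assms(2) by (simp add: box_def)
    also have "\<dots> \<le> interlace_lower la nu i" by (simp add: interlace_lower_def interlace_upper_def)
    also have "\<dots> \<le> f i" using assms(2) by (simp add: box_def)
    finally show ?thesis .
  qed
  moreover have "f (length la) = 0"
  proof -
    have "f (length la) \<le> interlace_upper la nu (length la)" using assms(2) by (simp add: box_def)
    also have "\<dots> \<le> part la (length la)" by (simp add: interlace_upper_def)
    finally show ?thesis by (simp add: part_eq_0)
  qed
  ultimately show "is_partition (partition_of_fun f)" "part (partition_of_fun f) = f"
    by (simp_all add: is_partition_partition_of_fun part_partition_of_fun)
qed

lemma common_strip_count_eq_card_box:
  assumes "is_partition la" "length la \<le> L"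
  shows "common_strip_count la nu d = card {f \<in> interlace_box la nu. (\<Sum>i<L. f i) = d}"
  unfolding common_strip_count_def
proof (rule bij_betw_same_card, rule bij_betw_imageI)
  show "inj_on part {mu \<in> partitions_of d. horizontal_strip la mu \<and> horizontal_strip nu mu}"
    by (auto simp: inj_on_def partitions_of_def intro: partition_eqI)
  have sum_part: "sum_list mu = (\<Sum>i<L. part mu i)"
    if "is_partition mu" "horizontal_strip la mu" for mu
    by (rule sum_list_eq_sum_part) (use horizontal_strip_length[OF that] assms(2) in linarith)
  show "part ` {mu \<in> partitions_of d. horizontal_strip la mu \<and> horizontal_strip nu mu}
      = {f \<in> interlace_box la nu. (\<Sum>i<L. f i) = d}"
  proof (intro equalityI subsetI)
    fix f assume "f \<in> part ` {mu \<in> partitions_of d. horizontal_strip la mu \<and> horizontal_strip nu mu}"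
    then obtain mu where "mu \<in> partitions_of d" "horizontal_strip la mu" "horizontal_strip nu mu"
      and "f = part mu" by blast
    then show "f \<in> {f \<in> interlace_box la nu. (\<Sum>i<L. f i) = d}"
      using sum_part horizontal_strips_iff_interlace_box by (auto simp: partitions_of_def)
  next
    fix f assume f: "f \<in> {f \<in> interlace_box la nu. (\<Sum>i<L. f i) = d}"
    let ?mu = "partition_of_fun f"
    have mu: "is_partition ?mu" "part ?mu = f"
      using f is_partition_of_interlace_box[OF assms(1)] part_of_interlace_box[OF assms(1)] by auto
    then have "horizontal_strip la ?mu \<and> horizontal_strip nu ?mu"
      using f horizontal_strips_iff_interlace_box by simp
    moreover from this have "sum_list ?mu = d" using sum_part mu f by simp
    ultimately show "f \<in> part ` {mu \<in> partitions_of d. horizontal_strip la mu \<and> horizontal_strip nu mu}"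
      using mu by (auto simp: partitions_of_def intro!: image_eqI[of _ _ ?mu])
  qed
qed

lemma sum_interlace_bounds:
  assumes "length la \<le> L" "length nu \<le> L"
  shows "(\<Sum>i<L. interlace_lower la nu i + interlace_upper la nu i) + max (part la 0) (part nu 0)
       = sum_list la + sum_list nu"
proof -
  have "(\<Sum>i<L. interlace_lower la nu i) + max (part la 0) (part nu 0)
      = (\<Sum>i<Suc L. max (part la i) (part nu i))"
    unfolding interlace_lower_def sum.lessThan_Suc_shift by simp
  also have "\<dots> = (\<Sum>i<L. max (part la i) (part nu i))"
    using assms by (simp add: part_eq_0)
  finally have lower: "(\<Sum>i<L. interlace_lower la nu i) + max (part la 0) (part nu 0)
      = (\<Sum>i<L. max (part la i) (part nu i))" .
  have "(\<Sum>i<L. max (part la i) (part nu i)) + (\<Sum>i<L. interlace_upper la nu i)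
      = (\<Sum>i<L. part la i + part nu i)"
    unfolding interlace_upper_def sum.distrib[symmetric] by (rule sum.cong) auto
  then show ?thesis
    using lower sum_list_eq_sum_part[OF assms(1)] sum_list_eq_sum_part[OF assms(2)]
    by (simp add: sum.distrib)
qed

lemma
  fixes nu :: "nat list"
  assumes "is_partition la"
  defines "S \<equiv> sum_list la + sum_list nu - max (part la 0) (part nu 0)"
  shows common_strip_count_symmetric:
      "d \<le> S \<Longrightarrow> common_strip_count la nu d = common_strip_count la nu (S - d)"
    and common_strip_count_eq_0: "S < d \<Longrightarrow> common_strip_count la nu d = 0"
proof -
  define L where "L = length la + length nu"
  have L: "length la \<le> L" "length nu \<le> L" unfolding L_def by auto
  have S: "(\<Sum>i<L. interlace_lower la nu i + interlace_upper la nu i) = S"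
    using sum_interlace_bounds[OF L] unfolding S_def by simp
  note count = common_strip_count_eq_card_box[OF assms(1) L(1)]
  show "d \<le> S \<Longrightarrow> common_strip_count la nu d = common_strip_count la nu (S - d)"
    unfolding count
    by (rule card_box_sum_reflect[where L = L and A = "interlace_lower la nu"
          and B = "interlace_upper la nu", unfolded S])
  assume "S < d"
  have bound: "(\<Sum>i<L. f i) \<le> S" if "f \<in> interlace_box la nu" for f
    unfolding S[symmetric] by (intro sum_mono) (simp add: in_boxD[OF that] trans_le_add2)
  then have "{f \<in> interlace_box la nu. (\<Sum>i<L. f i) = d} = {}" using \<open>S < d\<close> by (auto dest: bound)
  then show "common_strip_count la nu d = 0" unfolding count by (simp only: card.empty)
qed

section \<open>Semistandard tableaux\<close>

definition ssyts :: "nat list \<Rightarrow> mono \<Rightarrow> (nat \<times> nat \<Rightarrow> nat) set" where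
  "ssyts la \<alpha> = {T. is_ssyt la T \<and> (\<forall>k. card {c \<in> cells la. T c = k} = Poly_Mapping.lookup \<alpha> k)}"

definition mono_of_partition :: "nat list \<Rightarrow> mono" where
  "mono_of_partition la = Abs_poly_mapping (part la)"

lemma schur_eq_card_ssyts: "schur la \<alpha> = int (card (ssyts la \<alpha>))"
  by (simp add: schur_def ssyts_def)

lemma ssyt_eq_0: "is_ssyt la T \<Longrightarrow> c \<notin> cells la \<Longrightarrow> T c = 0"
  unfolding is_ssyt_def by blast

lemma ssyts_entry_in_keys:
  assumes "T \<in> ssyts la \<alpha>" "c \<in> cells la"
  shows "0 < Poly_Mapping.lookup \<alpha> (T c)"
proof -
  have "finite {c' \<in> cells la. T c' = T c}" by (simp add: finite_cells)
  then have "0 < card {c' \<in> cells la. T c' = T c}"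
    using assms(2) card_gt_0_iff by blast
  then show ?thesis using assms(1) by (simp add: ssyts_def)
qed

lemma finite_ssyts: "finite (ssyts la \<alpha>)"
proof -
  have "ssyts la \<alpha> \<subseteq> {T. \<forall>c. (c \<in> cells la \<longrightarrow> T c \<in> Poly_Mapping.keys \<alpha>) \<and> (c \<notin> cells la \<longrightarrow> T c = 0)}"
    using ssyts_entry_in_keys by (auto simp: ssyts_def is_ssyt_def in_keys_iff)
  then show ?thesis
    using finite_set_of_finite_funs[of "cells la" "Poly_Mapping.keys \<alpha>" 0] finite_subset
      finite_cells[of la]
    by auto
qed

lemma ssyt_row_mono:
  assumes "is_ssyt la T" "(i, j') \<in> cells la" "j \<le> j'"
  shows "T (i, j) \<le> T (i, j')"
  using assms(2,3)
proof (induction j' arbitrary: j)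
  case (Suc j')
  show ?case
  proof (cases "j = Suc j'")
    case False
    then have "j \<le> j'" using Suc by simp
    have c: "(i, j') \<in> cells la" using Suc.prems(1) by (auto simp: cells_def)
    have "T (i, j) \<le> T (i, j')" using Suc.IH[OF c \<open>j \<le> j'\<close>] .
    also have "\<dots> \<le> T (i, Suc j')" using assms(1) c Suc.prems(1) by (simp add: is_ssyt_def)
    finally show ?thesis .
  qed simp
qed simp

lemma ssyt_row_le_entry:
  assumes "is_partition la" "is_ssyt la T" "(i, j) \<in> cells la"
  shows "i \<le> T (i, j)"
  using assms(3)
proof (induction i)
  case (Suc i)
  have c: "(i, j) \<in> cells la" using cells_upper_row[OF assms(1) Suc.prems] .
  have "i \<le> T (i, j)" using Suc.IH[OF c] .
  also have "\<dots> < T (Suc i, j)" using assms(2) c Suc.prems by (simp add: is_ssyt_def)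
  finally show ?case by simp
qed simp

lemma card_ssyts_entries_le:
  assumes "T \<in> ssyts la \<alpha>"
  shows "card {c \<in> cells la. T c \<le> i} = (\<Sum>v\<le>i. Poly_Mapping.lookup \<alpha> v)"
proof -
  have "{c \<in> cells la. T c \<le> i} = (\<Union>v\<in>{..i}. {c \<in> cells la. T c = v})" by auto
  then have "card {c \<in> cells la. T c \<le> i} = (\<Sum>v\<le>i. card {c \<in> cells la. T c = v})"
    by (simp only:) (rule card_UN_disjoint, auto simp: finite_cells)
  then show ?thesis using assms by (simp add: ssyts_def)
qed

lemma card_cells_rows_le: "card {c \<in> cells la. fst c \<le> i} = (\<Sum>j\<le>i. part la j)"
proof -
  have "{c \<in> cells la. fst c \<le> i} = Sigma {..i} (\<lambda>r. {..<part la r})"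
    unfolding cells_eq_part by auto
  then show ?thesis by (simp add: card_SigmaI)
qed

text \<open>The entries of row \<open>i\<close> are at least \<open>i\<close>, so the entries \<open>\<le> i\<close> lie in the first
  \<open>i + 1\<close> rows.\<close>

lemma ssyts_content_dominated:
  assumes "is_partition la" "T \<in> ssyts la \<alpha>"
  shows "(\<Sum>v\<le>i. Poly_Mapping.lookup \<alpha> v) \<le> (\<Sum>j\<le>i. part la j)"
proof -
  have "{c \<in> cells la. T c \<le> i} \<subseteq> {c \<in> cells la. fst c \<le> i}"
    using ssyt_row_le_entry[OF assms(1)] assms(2) by (force simp: ssyts_def)
  then have "card {c \<in> cells la. T c \<le> i} \<le> card {c \<in> cells la. fst c \<le> i}"
    by (intro card_mono) (auto simp: finite_cells)
  then show ?thesis using card_ssyts_entries_le[OF assms(2)] card_cells_rows_le by simp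
qed

lemma lookup_mono_of_partition: "Poly_Mapping.lookup (mono_of_partition la) = part la"
proof -
  have "{i. part la i \<noteq> 0} \<subseteq> {..<length la}" by (auto simp: part_def)
  then have "finite {i. part la i \<noteq> 0}" using finite_subset by blast
  then show ?thesis by (simp add: mono_of_partition_def)
qed

lemma schur_nonzero_imp_dominated:
  assumes "is_partition ka" "schur ka (mono_of_partition la) \<noteq> 0"
  shows "(\<Sum>j\<le>i. part la j) \<le> (\<Sum>j\<le>i. part ka j)"
proof -
  from assms(2) obtain T where "T \<in> ssyts ka (mono_of_partition la)"
    unfolding schur_eq_card_ssyts by (metis all_not_in_conv card.empty of_nat_0)
  from ssyts_content_dominated[OF assms(1) this] show ?thesis by (simp add: lookup_mono_of_partition)
qed

lemma schur_mono_of_partition_self: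
  assumes "is_partition la"
  shows "schur la (mono_of_partition la) = 1"
proof -
  define T0 where "T0 = (\<lambda>c. if c \<in> cells la then fst c else 0)"
  have "ssyts la (mono_of_partition la) = {T0}"
  proof (intro equalityI subsetI)
    fix T assume T: "T \<in> ssyts la (mono_of_partition la)"
    have rows: "{c \<in> cells la. T c \<le> i} = {c \<in> cells la. fst c \<le> i}" for i
    proof (rule card_subset_eq)
      show "finite {c \<in> cells la. fst c \<le> i}" by (simp add: finite_cells)
      show "{c \<in> cells la. T c \<le> i} \<subseteq> {c \<in> cells la. fst c \<le> i}"
        using ssyt_row_le_entry[OF assms] T by (force simp: ssyts_def)
      show "card {c \<in> cells la. T c \<le> i} = card {c \<in> cells la. fst c \<le> i}"
        using card_ssyts_entries_le[OF T] card_cells_rows_le by (simp add: lookup_mono_of_partition)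
    qed
    have "T c = T0 c" for c
    proof (cases "c \<in> cells la")
      case True
      then have "T c \<le> fst c" using rows[of "fst c"] by blast
      moreover have "fst c \<le> T c"
        using ssyt_row_le_entry[OF assms, of T "fst c" "snd c"] T True by (simp add: ssyts_def)
      ultimately show ?thesis using True by (simp add: T0_def)
    next
      case False
      then show ?thesis using T ssyt_eq_0[of la T c] by (simp add: T0_def ssyts_def)
    qed
    then show "T \<in> {T0}" by auto
  next
    fix T assume "T \<in> {T0}"
    moreover have "{c \<in> cells la. T0 c = k} = {k} \<times> {..<part la k}" for k
      unfolding T0_def cells_eq_part by auto
    moreover have "is_ssyt la T0" unfolding is_ssyt_def T0_def by auto
    ultimately show "T \<in> ssyts la (mono_of_partition la)"
      by (simp add: ssyts_def lookup_mono_of_partition)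
  qed
  then show ?thesis by (simp add: schur_eq_card_ssyts)
qed

section \<open>Linear independence of the products of Schur functions\<close>

definition partition_coeffs :: "(nat list \<times> nat list \<Rightarrow> int) \<Rightarrow> bool" where
  "partition_coeffs c \<longleftrightarrow>
     finite {p. c p \<noteq> 0} \<and> (\<forall>p. c p \<noteq> 0 \<longrightarrow> is_partition (fst p) \<and> is_partition (snd p))"

definition dominance_weight :: "nat \<Rightarrow> nat list \<Rightarrow> nat" where
  "dominance_weight L la = (\<Sum>i<L. \<Sum>j\<le>i. part la j)"

lemma partition_coeffsI:
  assumes "{p. c p \<noteq> 0} \<subseteq> partitions_of n \<times> partitions_of m"
  shows "partition_coeffs c"
  using assms finite_subset[OF assms] finite_partitions_of
  by (auto simp: partition_coeffs_def partitions_of_def)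

lemma sum_fun_apply: "(sum f A) x = sum (\<lambda>a. f a x) A"
  by (induction A rule: infinite_finite_induct) auto

lemma schur_expand_eq_sum:
  assumes "finite P" "{p. c p \<noteq> 0} \<subseteq> P"
  shows "schur_expand c x = (\<Sum>p\<in>P. c p * sf_tensor (schur (fst p)) (schur (snd p)) x)"
  unfolding schur_expand_def sum_fun_apply
  by (rule sum.mono_neutral_left) (use assms in auto)

lemma schur_expand_sum:
  assumes "finite D" "\<And>d. d \<in> D \<Longrightarrow> finite {p. c d p \<noteq> 0}"
  shows "schur_expand (\<lambda>p. \<Sum>d\<in>D. c d p) = (\<Sum>d\<in>D. schur_expand (c d))"
proof
  fix x
  define P where "P = (\<Union>d\<in>D. {p. c d p \<noteq> 0})"
  have P: "finite P" using assms by (simp add: P_def)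
  have "{p. (\<Sum>d\<in>D. c d p) \<noteq> 0} \<subseteq> P"
    unfolding P_def by (auto elim: sum.not_neutral_contains_not_neutral)
  then have "schur_expand (\<lambda>p. \<Sum>d\<in>D. c d p) x
      = (\<Sum>p\<in>P. (\<Sum>d\<in>D. c d p) * sf_tensor (schur (fst p)) (schur (snd p)) x)"
    by (rule schur_expand_eq_sum[OF P])
  also have "\<dots> = (\<Sum>d\<in>D. \<Sum>p\<in>P. c d p * sf_tensor (schur (fst p)) (schur (snd p)) x)"
    by (simp add: sum_distrib_right sum.swap[of _ P])
  also have "\<dots> = (\<Sum>d\<in>D. schur_expand (c d) x)"
    by (intro sum.cong refl schur_expand_eq_sum[symmetric] P) (auto simp: P_def)
  finally show "schur_expand (\<lambda>p. \<Sum>d\<in>D. c d p) x = (\<Sum>d\<in>D. schur_expand (c d)) x"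
    by (simp add: sum_fun_apply)
qed

lemma schur_expand_diff:
  assumes "finite {p. c p \<noteq> 0}" "finite {p. c' p \<noteq> 0}"
  shows "schur_expand (\<lambda>p. c p - c' p) = schur_expand c - schur_expand c'"
proof
  fix x
  define P where "P = {p. c p \<noteq> 0} \<union> {p. c' p \<noteq> 0}"
  have P: "finite P" using assms by (simp add: P_def)
  have "schur_expand (\<lambda>p. c p - c' p) x
      = (\<Sum>p\<in>P. (c p - c' p) * sf_tensor (schur (fst p)) (schur (snd p)) x)"
    by (rule schur_expand_eq_sum[OF P]) (auto simp: P_def)
  also have "\<dots> = schur_expand c x - schur_expand c' x"
    using schur_expand_eq_sum[OF P, of c x] schur_expand_eq_sum[OF P, of c' x]
    by (simp add: P_def left_diff_distrib sum_subtractf)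
  finally show "schur_expand (\<lambda>p. c p - c' p) x = (schur_expand c - schur_expand c') x" by simp
qed

lemma dominance_weight_mono:
  assumes "\<And>i. (\<Sum>j\<le>i. part mu j) \<le> (\<Sum>j\<le>i. part la j)"
  shows "dominance_weight L mu \<le> dominance_weight L la"
  unfolding dominance_weight_def by (rule sum_mono) (rule assms)

lemma dominance_weight_strict_mono:
  assumes "is_partition la" "is_partition mu" "length la \<le> L" "length mu \<le> L" "la \<noteq> mu"
    and dominated: "\<And>i. (\<Sum>j\<le>i. part mu j) \<le> (\<Sum>j\<le>i. part la j)"
  shows "dominance_weight L mu < dominance_weight L la"
proof -
  have "\<exists>i. part la i \<noteq> part mu i" using partition_eqI[OF assms(1,2)] assms(5) by blast
  define i0 where "i0 = (LEAST i. part la i \<noteq> part mu i)"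
  have i0: "part la i0 \<noteq> part mu i0"
    unfolding i0_def by (rule LeastI_ex) fact
  have before: "part la j = part mu j" if "j < i0" for j
    using that not_less_Least unfolding i0_def by blast
  have "i0 < L" using i0 assms(3,4) part_eq_0 by (metis not_le le_trans)
  have "(\<Sum>j<i0. part mu j) = (\<Sum>j<i0. part la j)" using before by simp
  then have "(\<Sum>j\<le>i0. part mu j) < (\<Sum>j\<le>i0. part la j)"
    using dominated[of i0] i0 by (simp add: lessThan_Suc_atMost[symmetric])
  then show ?thesis unfolding dominance_weight_def
    using \<open>i0 < L\<close> dominated by (intro sum_strict_mono_ex1) auto
qed

text \<open>Unitriangularity: among the products of at most the same dominance weight,
  \<open>s_la \<otimes> s_nu\<close> is the only one with a nonzero coefficient at \<open>x^la y^nu\<close>.\<close>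

lemma schur_tensor_nonzero_imp_weight_less:
  assumes "is_partition la" "is_partition nu" "is_partition la'" "is_partition nu'"
    and "length la \<le> L" "length nu \<le> L" "length la' \<le> L" "length nu' \<le> L" "(la', nu') \<noteq> (la, nu)"
    and "sf_tensor (schur la') (schur nu') (mono_of_partition la, mono_of_partition nu) \<noteq> 0"
  shows "dominance_weight L la + dominance_weight L nu < dominance_weight L la' + dominance_weight L nu'"
proof -
  have "schur la' (mono_of_partition la) \<noteq> 0" "schur nu' (mono_of_partition nu) \<noteq> 0"
    using assms(10) by (auto simp: sf_tensor_def)
  then have dominated:
    "\<And>i. (\<Sum>j\<le>i. part la j) \<le> (\<Sum>j\<le>i. part la' j)"
    "\<And>i. (\<Sum>j\<le>i. part nu j) \<le> (\<Sum>j\<le>i. part nu' j)"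
    using schur_nonzero_imp_dominated assms(3,4) by blast+
  consider "la' \<noteq> la" | "nu' \<noteq> nu" using assms(9) by blast
  then show ?thesis
  proof cases
    case 1
    then have "dominance_weight L la < dominance_weight L la'"
      using dominance_weight_strict_mono assms(1,3,5,7) dominated(1) by blast
    then show ?thesis using dominance_weight_mono[OF dominated(2), of L] by simp
  next
    case 2
    then have "dominance_weight L nu < dominance_weight L nu'"
      using dominance_weight_strict_mono assms(2,4,6,8) dominated(2) by blast
    then show ?thesis using dominance_weight_mono[OF dominated(1), of L] by simp
  qed
qed

lemma schur_expand_eq_0D:
  assumes "partition_coeffs c" "schur_expand c = 0"
  shows "c p = 0"
proof (rule ccontr)
  assume "c p \<noteq> 0"
  define P where "P = {p. c p \<noteq> 0}"
  have "p \<in> P" using \<open>c p \<noteq> 0\<close> by (simp add: P_def)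
  then have P: "finite P" "P \<noteq> {}" using assms(1) by (auto simp only: partition_coeffs_def P_def)
  have partitions: "is_partition (fst q) \<and> is_partition (snd q)" if "q \<in> P" for q
    using assms(1) that unfolding partition_coeffs_def P_def by blast
  define L where "L = Max ((\<lambda>q. length (fst q) + length (snd q)) ` P)"
  have lengths: "length (fst q) \<le> L \<and> length (snd q) \<le> L" if "q \<in> P" for q
  proof -
    have "length (fst q) + length (snd q) \<le> L" unfolding L_def using P(1) that by (intro Max_ge) auto
    then show ?thesis by simp
  qed
  define W where "W q = dominance_weight L (fst q) + dominance_weight L (snd q)" for q
  have "Max (W ` P) \<in> W ` P" using P by (intro Max_in) auto
  then obtain p0 where p0: "p0 \<in> P" "W p0 = Max (W ` P)" by auto
  define x where "x = (mono_of_partition (fst p0), mono_of_partition (snd p0))"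
  have others: "c q * sf_tensor (schur (fst q)) (schur (snd q)) x = 0" if "q \<in> P - {p0}" for q
  proof (rule ccontr)
    assume "c q * sf_tensor (schur (fst q)) (schur (snd q)) x \<noteq> 0"
    then have "sf_tensor (schur (fst q)) (schur (snd q)) x \<noteq> 0" by simp
    moreover have "(fst q, snd q) \<noteq> (fst p0, snd p0)" using that by auto
    ultimately have "W p0 < W q"
      using schur_tensor_nonzero_imp_weight_less[of "fst p0" "snd p0" "fst q" "snd q" L]
        partitions lengths that p0(1) unfolding W_def x_def by blast
    moreover have "W q \<le> W p0" using that P(1) p0(2) by simp
    ultimately show False by simp
  qed
  have "0 = schur_expand c x" using assms(2) by simp
  also have "\<dots> = (\<Sum>q\<in>P. c q * sf_tensor (schur (fst q)) (schur (snd q)) x)"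
    by (rule schur_expand_eq_sum[OF P(1)]) (simp add: P_def)
  also have "\<dots> = c p0 * sf_tensor (schur (fst p0)) (schur (snd p0)) x
      + (\<Sum>q\<in>P - {p0}. c q * sf_tensor (schur (fst q)) (schur (snd q)) x)"
    by (rule sum.remove[OF P(1) p0(1)])
  also have "\<dots> = c p0 * sf_tensor (schur (fst p0)) (schur (snd p0)) x"
    using sum.neutral[of "P - {p0}"] others by (metis (no_types, lifting) add_0_right)
  also have "\<dots> = c p0"
    using partitions[OF p0(1)] by (simp add: sf_tensor_def x_def schur_mono_of_partition_self)
  finally show False using p0(1) by (simp add: P_def)
qed

lemma schur_coeffs_schur_expand:
  assumes "partition_coeffs c"
  shows "schur_coeffs (schur_expand c) = c"
  unfolding schur_coeffs_def
proof (rule the_equality)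
  show "finite {p. c p \<noteq> 0} \<and> (\<forall>p. c p \<noteq> 0 \<longrightarrow> is_partition (fst p) \<and> is_partition (snd p)) \<and>
        schur_expand c = schur_expand c"
    using assms by (simp add: partition_coeffs_def)
  fix c' assume c': "finite {p. c' p \<noteq> 0} \<and> (\<forall>p. c' p \<noteq> 0 \<longrightarrow> is_partition (fst p) \<and> is_partition (snd p))
     \<and> schur_expand c = schur_expand c'"
  then have finite: "finite {p. c' p \<noteq> 0}" "finite {p. c p \<noteq> 0}"
    using assms by (simp_all add: partition_coeffs_def)
  have "partition_coeffs (\<lambda>p. c' p - c p)"
    unfolding partition_coeffs_def
  proof
    have "{p. c' p - c p \<noteq> 0} \<subseteq> {p. c' p \<noteq> 0} \<union> {p. c p \<noteq> 0}" by auto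
    then show "finite {p. c' p - c p \<noteq> 0}" using finite finite_subset by blast
    show "\<forall>p. c' p - c p \<noteq> 0 \<longrightarrow> is_partition (fst p) \<and> is_partition (snd p)"
    proof (intro allI impI)
      fix p assume "c' p - c p \<noteq> 0"
      then have "c' p \<noteq> 0 \<or> c p \<noteq> 0" by auto
      then show "is_partition (fst p) \<and> is_partition (snd p)"
        using c' assms unfolding partition_coeffs_def by blast
    qed
  qed
  moreover have "schur_expand (\<lambda>p. c' p - c p) = 0"
    using schur_expand_diff[OF finite] c' by simp
  ultimately have "c' p - c p = 0" for p by (rule schur_expand_eq_0D)
  then show "c' = c" by (simp add: fun_eq_iff)
qed

lemma trunc_schur_expand:
  assumes "partition_coeffs c"
  shows "trunc L (schur_expand c)
       = schur_expand (\<lambda>p. if first_part (fst p) \<le> L \<and> first_part (snd p) \<le> L then c p else 0)"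
  unfolding trunc_def schur_coeffs_schur_expand[OF assms] ..

section \<open>Removing the largest entry of a tableau\<close>

definition strips_removed :: "nat list \<Rightarrow> nat \<Rightarrow> nat list set" where
  "strips_removed la e =
     {rho. is_partition rho \<and> horizontal_strip la rho \<and> sum_list rho + e = sum_list la}"

definition strips_added :: "nat list \<Rightarrow> nat \<Rightarrow> nat list set" where
  "strips_added mu k = {la. is_partition la \<and> horizontal_strip la mu \<and> sum_list la = sum_list mu + k}"

definition fill_strip :: "nat list \<Rightarrow> nat list \<Rightarrow> nat \<Rightarrow> (nat \<times> nat \<Rightarrow> nat) \<Rightarrow> nat \<times> nat \<Rightarrow> nat" where
  "fill_strip la rho N T = (\<lambda>c. if c \<in> cells la \<and> c \<notin> cells rho then N else T c)"

lemma finite_strips_removed: "finite (strips_removed la e)"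
  by (rule finite_subset[OF _ finite_partitions_of[of "sum_list la - e"]])
    (auto simp: strips_removed_def partitions_of_def)

lemma finite_strips_added: "finite (strips_added mu k)"
  by (rule finite_subset[OF _ finite_partitions_of[of "sum_list mu + k"]])
    (auto simp: strips_added_def partitions_of_def)

lemma card_cells_diff:
  assumes "cells rho \<subseteq> cells la"
  shows "card (cells la - cells rho) = sum_list la - sum_list rho"
  using card_Diff_subset[OF finite_cells assms] by (simp add: card_cells)

lemma down_closed_eq_lessThan_card:
  fixes A :: "nat set"
  assumes "finite A" "\<And>j j'. j \<in> A \<Longrightarrow> j' < j \<Longrightarrow> j' \<in> A"
  shows "A = {..<card A}"
proof (intro equalityI subsetI)
  fix j assume "j \<in> A"
  then have "{..j} \<subseteq> A" using assms(2) by (auto simp: le_less)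
  then have "card {..j} \<le> card A" by (rule card_mono[OF assms(1)])
  then show "j \<in> {..<card A}" by simp
next
  fix j assume j: "j \<in> {..<card A}"
  show "j \<in> A"
  proof (rule ccontr)
    assume "j \<notin> A"
    have "A \<subseteq> {..<j}"
    proof
      fix a assume "a \<in> A"
      then have "\<not> j \<le> a" using assms(2) \<open>j \<notin> A\<close> by (metis le_neq_implies_less)
      then show "a \<in> {..<j}" by simp
    qed
    then have "card A \<le> j" using card_mono[of "{..<j}" A] by simp
    then show False using j by simp
  qed
qed

lemma ssyts_entry_less:
  assumes "T \<in> ssyts rho \<beta>" "c \<in> cells rho" "\<forall>k\<ge>N. Poly_Mapping.lookup \<beta> k = 0"
  shows "T c < N"
  using ssyts_entry_in_keys[OF assms(1,2)] assms(3) by (metis less_irrefl not_le)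

lemma ssyts_entry_le:
  assumes "T \<in> ssyts la \<alpha>" "c \<in> cells la" "\<forall>k>N. Poly_Mapping.lookup \<alpha> k = 0"
  shows "T c \<le> N"
  using ssyts_entry_in_keys[OF assms(1,2)] assms(3) by (metis less_irrefl not_le)

lemma is_ssyt_restrict:
  assumes "is_ssyt la T" "cells rho \<subseteq> cells la"
  shows "is_ssyt rho (\<lambda>c. if c \<in> cells rho then T c else 0)"
  using assms unfolding is_ssyt_def by (simp add: subset_iff)

lemma is_ssyt_fill_strip:
  assumes rho: "is_partition rho" "horizontal_strip la rho" and T: "is_ssyt rho T"
    and less: "\<And>c. c \<in> cells rho \<Longrightarrow> T c < N"
  shows "is_ssyt la (fill_strip la rho N T)"
  unfolding is_ssyt_def
proof (intro conjI allI impI)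
  let ?T = "fill_strip la rho N T"
  fix i j assume c: "(i, j) \<in> cells la \<and> (i, Suc j) \<in> cells la"
  show "?T (i, j) \<le> ?T (i, Suc j)"
  proof (cases "(i, Suc j) \<in> cells rho")
    case True
    then have "(i, j) \<in> cells rho" by (auto simp: cells_eq_part)
    then show ?thesis using True T by (simp add: fill_strip_def is_ssyt_def)
  next
    case False
    then show ?thesis using c less by (auto simp: fill_strip_def less_imp_le)
  qed
next
  let ?T = "fill_strip la rho N T"
  fix i j assume c: "(i, j) \<in> cells la \<and> (Suc i, j) \<in> cells la"
  show "?T (i, j) < ?T (Suc i, j)"
  proof (cases "(Suc i, j) \<in> cells rho")
    case True
    then have "(i, j) \<in> cells rho" using cells_upper_row[OF rho(1)] by blast
    then show ?thesis using True T by (simp add: fill_strip_def is_ssyt_def)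
  next
    case False
    have "j < part la (Suc i)" using c by (simp add: cells_eq_part)
    also have "\<dots> \<le> part rho i" using rho(2) by (simp add: horizontal_strip_def)
    finally have "(i, j) \<in> cells rho" by (simp add: cells_eq_part)
    then show ?thesis using False c less by (simp add: fill_strip_def)
  qed
next
  fix c assume "c \<notin> cells la"
  moreover from this have "c \<notin> cells rho" using horizontal_strip_cells[OF rho(2)] by blast
  ultimately show "fill_strip la rho N T c = 0" using ssyt_eq_0[OF T] by (simp add: fill_strip_def)
qed

lemma fill_strip_in_ssyts:
  assumes rho: "rho \<in> strips_removed la (Poly_Mapping.lookup \<alpha> N)"
    and \<beta>: "Poly_Mapping.lookup \<beta> = (\<lambda>k. if k = N then 0 else Poly_Mapping.lookup \<alpha> k)"
    and \<alpha>: "\<forall>k>N. Poly_Mapping.lookup \<alpha> k = 0"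
    and T: "T \<in> ssyts rho \<beta>"
  shows "fill_strip la rho N T \<in> ssyts la \<alpha>"
proof -
  have rho: "is_partition rho" "horizontal_strip la rho"
    "sum_list rho + Poly_Mapping.lookup \<alpha> N = sum_list la"
    using rho by (auto simp: strips_removed_def)
  have sub: "cells rho \<subseteq> cells la" using horizontal_strip_cells[OF rho(2)] .
  have "\<forall>k\<ge>N. Poly_Mapping.lookup \<beta> k = 0" using \<alpha> \<beta> by auto
  then have less: "c \<in> cells rho \<Longrightarrow> T c < N" for c using ssyts_entry_less[OF T] by blast
  have content: "card {c \<in> cells rho. T c = k} = Poly_Mapping.lookup \<beta> k" for k
    using T by (simp add: ssyts_def)
  let ?T = "fill_strip la rho N T"
  have "card {c \<in> cells la. ?T c = k} = Poly_Mapping.lookup \<alpha> k" for k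
  proof (cases "k = N")
    case True
    then have "{c \<in> cells la. ?T c = k} = cells la - cells rho"
      using less by (auto simp: fill_strip_def)
    then show ?thesis using card_cells_diff[OF sub] rho(3) True by simp
  next
    case False
    then have "{c \<in> cells la. ?T c = k} = {c \<in> cells rho. T c = k}"
      using sub by (auto simp: fill_strip_def)
    then show ?thesis using content[of k] \<beta> False by simp
  qed
  moreover have "is_ssyt la ?T"
    using is_ssyt_fill_strip[OF rho(1,2) _ less] T by (simp add: ssyts_def)
  ultimately show ?thesis by (simp add: ssyts_def)
qed

lemma inj_on_fill_strip: "inj_on (fill_strip la rho N) (ssyts rho \<beta>)"
proof (rule inj_onI)
  fix T1 T2 assume T: "T1 \<in> ssyts rho \<beta>" "T2 \<in> ssyts rho \<beta>"
    "fill_strip la rho N T1 = fill_strip la rho N T2"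
  show "T1 = T2"
  proof
    fix c show "T1 c = T2 c"
    proof (cases "c \<in> cells rho")
      case True
      then show ?thesis using fun_cong[OF T(3), of c] by (simp add: fill_strip_def)
    next
      case False
      then show ?thesis
        using T(1,2) ssyt_eq_0[of rho T1 c] ssyt_eq_0[of rho T2 c] by (simp add: ssyts_def)
    qed
  qed
qed

lemma cells_eq_fill_strip_less:
  assumes "rho \<in> strips_removed la e" "T \<in> ssyts rho \<beta>" "\<forall>k\<ge>N. Poly_Mapping.lookup \<beta> k = 0"
  shows "cells rho = {c \<in> cells la. fill_strip la rho N T c < N}"
proof -
  have "cells rho \<subseteq> cells la"
    using assms(1) horizontal_strip_cells by (simp add: strips_removed_def)
  then show ?thesis using ssyts_entry_less[OF assms(2) _ assms(3)] by (auto simp: fill_strip_def)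
qed

text \<open>Row monotonicity makes the cells with entries less than \<open>N\<close> an initial segment of each
  row, and column strictness makes the remaining cells a horizontal strip.\<close>

lemma ssyt_cells_less_partition:
  assumes la: "is_partition la" and ssyt: "is_ssyt la T" and le: "\<And>c. c \<in> cells la \<Longrightarrow> T c \<le> N"
  obtains rho where "is_partition rho" "horizontal_strip la rho" "cells rho = {c \<in> cells la. T c < N}"
proof -
  define A where "A i = {j. j < part la i \<and> T (i, j) < N}" for i
  define r where "r i = card (A i)" for i
  have A_subset: "A i \<subseteq> {..<part la i}" for i by (auto simp: A_def)
  then have A_finite: "finite (A i)" for i using finite_subset by blast
  have A_initial: "A i = {..<r i}" for i
    unfolding r_def
  proof (rule down_closed_eq_lessThan_card[OF A_finite])
    fix j j' assume j: "j \<in> A i" and j': "j' < j"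
    then have "(i, j) \<in> cells la" by (simp add: A_def cells_eq_part)
    then have "T (i, j') \<le> T (i, j)" using ssyt_row_mono[OF ssyt] j' by simp
    then show "j' \<in> A i" using j j' by (auto simp: A_def)
  qed
  have below: "{..<part la (Suc i)} \<subseteq> A i" for i
  proof
    fix j assume "j \<in> {..<part la (Suc i)}"
    then have c: "(Suc i, j) \<in> cells la" by (simp add: cells_eq_part)
    then have c': "(i, j) \<in> cells la" using cells_upper_row[OF la] by blast
    have "T (i, j) < T (Suc i, j)" using ssyt c c' by (simp add: is_ssyt_def)
    then show "j \<in> A i" using le[OF c] c' by (simp add: A_def cells_eq_part)
  qed
  have r_le: "r i \<le> part la i" "part la (Suc i) \<le> r i" for i
    using card_mono[OF finite_lessThan A_subset[of i]] card_mono[OF A_finite below[of i]]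
    by (simp_all add: r_def)
  have "r (Suc i) \<le> r i" for i using r_le[of "Suc i"] r_le[of i] by linarith
  moreover have "r (length la) = 0" using r_le[of "length la"] by (simp add: part_eq_0)
  ultimately have rho: "is_partition (partition_of_fun r)" "part (partition_of_fun r) = r"
    by (simp_all add: is_partition_partition_of_fun part_partition_of_fun)
  show thesis
  proof
    show "is_partition (partition_of_fun r)" by (fact rho(1))
    show "horizontal_strip la (partition_of_fun r)"
      unfolding horizontal_strip_def rho(2) using r_le by simp
    show "cells (partition_of_fun r) = {c \<in> cells la. T c < N}"
      using A_initial unfolding cells_eq_part rho(2) by (auto simp: A_def set_eq_iff)
  qed
qed

lemma ssyts_eq_fill_strip:
  assumes la: "is_partition la" and T: "T \<in> ssyts la \<alpha>"
    and \<beta>: "Poly_Mapping.lookup \<beta> = (\<lambda>k. if k = N then 0 else Poly_Mapping.lookup \<alpha> k)"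
    and \<alpha>: "\<forall>k>N. Poly_Mapping.lookup \<alpha> k = 0"
  shows "\<exists>rho\<in>strips_removed la (Poly_Mapping.lookup \<alpha> N). \<exists>T'\<in>ssyts rho \<beta>. T = fill_strip la rho N T'"
proof -
  have ssyt: "is_ssyt la T" and content: "\<And>k. card {c \<in> cells la. T c = k} = Poly_Mapping.lookup \<alpha> k"
    using T by (auto simp: ssyts_def)
  have le: "c \<in> cells la \<Longrightarrow> T c \<le> N" for c using ssyts_entry_le[OF T _ \<alpha>] .
  obtain rho where rho: "is_partition rho" "horizontal_strip la rho"
    and cells_rho: "cells rho = {c \<in> cells la. T c < N}"
    using ssyt_cells_less_partition[OF la ssyt le] by blast
  have sub: "cells rho \<subseteq> cells la" unfolding cells_rho by blast
  have "{c \<in> cells la. T c = N} = cells la - cells rho"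
    using le unfolding cells_rho by force
  then have "Poly_Mapping.lookup \<alpha> N = sum_list la - sum_list rho"
    using content[of N] card_cells_diff[OF sub] by simp
  moreover have "sum_list rho \<le> sum_list la"
    using card_mono[OF finite_cells sub] by (simp add: card_cells)
  ultimately have rho_removed: "rho \<in> strips_removed la (Poly_Mapping.lookup \<alpha> N)"
    using rho by (simp add: strips_removed_def)
  define T' where "T' = (\<lambda>c. if c \<in> cells rho then T c else 0)"
  have "card {c \<in> cells rho. T' c = k} = Poly_Mapping.lookup \<beta> k" for k
  proof (cases "k = N")
    case True
    then have "{c \<in> cells rho. T' c = k} = {}" using cells_rho by (auto simp: T'_def)
    then have "card {c \<in> cells rho. T' c = k} = 0" by (simp only: card.empty)
    then show ?thesis using True \<beta> by simp
  next
    case False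
    then have "{c \<in> cells rho. T' c = k} = {c \<in> cells la. T c = k}"
      using le cells_rho by (force simp: T'_def)
    then show ?thesis using content[of k] \<beta> False by simp
  qed
  then have "T' \<in> ssyts rho \<beta>"
    using is_ssyt_restrict[OF ssyt sub] by (simp add: ssyts_def T'_def)
  moreover have "T = fill_strip la rho N T'"
  proof
    fix c show "T c = fill_strip la rho N T' c"
      using le[of c] ssyt_eq_0[OF ssyt, of c] sub cells_rho
      by (cases "c \<in> cells la") (auto simp: fill_strip_def T'_def)
  qed
  ultimately show ?thesis using rho_removed by blast
qed

lemma card_ssyts_remove_largest:
  assumes la: "is_partition la"
    and \<beta>: "Poly_Mapping.lookup \<beta> = (\<lambda>k. if k = N then 0 else Poly_Mapping.lookup \<alpha> k)"
    and \<alpha>: "\<forall>k>N. Poly_Mapping.lookup \<alpha> k = 0"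
  shows "card (ssyts la \<alpha>) = (\<Sum>rho\<in>strips_removed la (Poly_Mapping.lookup \<alpha> N). card (ssyts rho \<beta>))"
proof -
  let ?R = "strips_removed la (Poly_Mapping.lookup \<alpha> N)"
  have \<beta>_vanishes: "\<forall>k\<ge>N. Poly_Mapping.lookup \<beta> k = 0" using \<alpha> \<beta> by auto
  have decompose: "ssyts la \<alpha> = (\<Union>rho\<in>?R. fill_strip la rho N ` ssyts rho \<beta>)"
    using ssyts_eq_fill_strip[OF la _ \<beta> \<alpha>] fill_strip_in_ssyts[OF _ \<beta> \<alpha>] by blast
  have disjoint: "fill_strip la r1 N ` ssyts r1 \<beta> \<inter> fill_strip la r2 N ` ssyts r2 \<beta> = {}"
    if "r1 \<in> ?R" "r2 \<in> ?R" "r1 \<noteq> r2" for r1 r2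
  proof (rule ccontr)
    assume "fill_strip la r1 N ` ssyts r1 \<beta> \<inter> fill_strip la r2 N ` ssyts r2 \<beta> \<noteq> {}"
    then obtain T1 T2 where T: "T1 \<in> ssyts r1 \<beta>" "T2 \<in> ssyts r2 \<beta>"
      "fill_strip la r1 N T1 = fill_strip la r2 N T2" by auto
    have "cells r1 = cells r2"
      using cells_eq_fill_strip_less[OF that(1) T(1) \<beta>_vanishes]
        cells_eq_fill_strip_less[OF that(2) T(2) \<beta>_vanishes] T(3) by simp
    then show False
      using partition_eq_if_cells_eq that by (auto simp: strips_removed_def)
  qed
  have "card (ssyts la \<alpha>) = (\<Sum>rho\<in>?R. card (fill_strip la rho N ` ssyts rho \<beta>))"
    unfolding decompose
    by (rule card_UN_disjoint) (use finite_strips_removed finite_ssyts disjoint in auto)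
  also have "\<dots> = (\<Sum>rho\<in>?R. card (ssyts rho \<beta>))"
    using inj_on_fill_strip by (intro sum.cong refl card_image)
  finally show ?thesis .
qed

section \<open>Exchanging horizontal strips\<close>

text \<open>If \<open>la/mu\<close> and \<open>la/sg\<close> are horizontal strips, then \<open>(la\<^sub>2, la\<^sub>3, \<dots>)\<close> lies in the
  interlacing box of \<open>mu\<close> and \<open>sg\<close>, as does every \<open>rho\<close> for which \<open>mu/rho\<close> and \<open>sg/rho\<close> are
  horizontal strips. Reflecting the box exchanges the two kinds of partitions; \<open>la\<^sub>1\<close> is then
  fixed by the size of \<open>la\<close>.\<close>

definition strip_exchange_down :: "nat list \<Rightarrow> nat list \<Rightarrow> nat list \<Rightarrow> nat list" where
  "strip_exchange_down mu sg la =
     partition_of_fun (box_reflect (interlace_lower mu sg) (interlace_upper mu sg) (\<lambda>i. part la (Suc i)))"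

definition strip_exchange_up :: "nat list \<Rightarrow> nat \<Rightarrow> nat list \<Rightarrow> nat list \<Rightarrow> nat list" where
  "strip_exchange_up mu k sg rho =
     (let g = box_reflect (interlace_lower mu sg) (interlace_upper mu sg) (part rho)
      in partition_of_fun (case_nat (sum_list mu + k - (\<Sum>i<length mu + length sg. g i)) g))"

lemma horizontal_strips_over_iff_interlace_box:
  "horizontal_strip la mu \<and> horizontal_strip la sg
     \<longleftrightarrow> max (part mu 0) (part sg 0) \<le> part la 0 \<and> (\<lambda>i. part la (Suc i)) \<in> interlace_box mu sg"
proof
  assume "horizontal_strip la mu \<and> horizontal_strip la sg"
  then show "max (part mu 0) (part sg 0) \<le> part la 0 \<and> (\<lambda>i. part la (Suc i)) \<in> interlace_box mu sg"
    unfolding horizontal_strip_def box_def interlace_lower_def interlace_upper_def by auto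
next
  assume *: "max (part mu 0) (part sg 0) \<le> part la 0 \<and> (\<lambda>i. part la (Suc i)) \<in> interlace_box mu sg"
  then have "part mu i \<le> part la i \<and> part sg i \<le> part la i" for i
    by (cases i) (auto simp: box_def interlace_lower_def)
  then show "horizontal_strip la mu \<and> horizontal_strip la sg"
    using * unfolding horizontal_strip_def box_def interlace_upper_def by auto
qed

lemma
  assumes "is_partition mu" "max (part mu 0) (part sg 0) \<le> f 0"
    and "(\<lambda>i. f (Suc i)) \<in> interlace_box mu sg"
  shows is_partition_of_shifted_interlace_box: "is_partition (partition_of_fun f)"
    and part_of_shifted_interlace_box: "part (partition_of_fun f) = f"
proof -
  have "f (Suc i) \<le> f i" for i
  proof (cases i)
    case 0
    have "f (Suc 0) \<le> interlace_upper mu sg 0" using in_boxD[OF assms(3)] by simp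
    also have "\<dots> \<le> f 0" using assms(2) by (simp add: interlace_upper_def min_le_iff_disj)
    finally show ?thesis using 0 by simp
  next
    case (Suc i')
    have "f (Suc (Suc i')) \<le> interlace_upper mu sg (Suc i')" using in_boxD[OF assms(3)] by simp
    also have "\<dots> \<le> interlace_lower mu sg i'" by (simp add: interlace_lower_def interlace_upper_def)
    also have "\<dots> \<le> f (Suc i')" using in_boxD[OF assms(3)] by simp
    finally show ?thesis using Suc by simp
  qed
  moreover have "f (Suc (length mu)) = 0"
  proof -
    have "f (Suc (length mu)) \<le> interlace_upper mu sg (length mu)" using in_boxD[OF assms(3)] by simp
    also have "\<dots> \<le> part mu (length mu)" by (simp add: interlace_upper_def)
    finally show ?thesis by (simp add: part_eq_0)
  qed
  ultimately show "is_partition (partition_of_fun f)" "part (partition_of_fun f) = f"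
    by (simp_all add: is_partition_partition_of_fun part_partition_of_fun)
qed

lemma sum_list_interlace_box_reflect:
  assumes "is_partition rho" "part rho \<in> interlace_box mu sg"
  shows "sum_list rho
      + (\<Sum>i<length mu + length sg. box_reflect (interlace_lower mu sg) (interlace_upper mu sg) (part rho) i)
      + max (part mu 0) (part sg 0) = sum_list mu + sum_list sg"
proof -
  let ?L = "length mu + length sg"
  have "length rho \<le> length mu"
    using horizontal_strip_length[OF assms(1)] horizontal_strips_iff_interlace_box assms(2) by blast
  then have "sum_list rho = (\<Sum>i<?L. part rho i)" by (intro sum_list_eq_sum_part) simp
  then show ?thesis
    using sum_box_reflect[OF assms(2), of ?L] sum_interlace_bounds[of mu ?L sg] by simp
qed

lemma strip_exchange_up:
  assumes mu: "is_partition mu" and j: "j \<le> e" "j \<le> k"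
    and rho: "rho \<in> strips_removed mu (e - j)" and sg: "sg \<in> strips_added rho (k - j)"
  defines "la \<equiv> strip_exchange_up mu k sg rho"
  shows "la \<in> strips_added mu k" "sg \<in> strips_removed la e" "strip_exchange_down mu sg la = rho"
    "e + sum_list rho - sum_list mu = j"
proof -
  from rho have rho: "is_partition rho" "horizontal_strip mu rho" "sum_list rho + (e - j) = sum_list mu"
    by (auto simp: strips_removed_def)
  from sg have sg: "is_partition sg" "horizontal_strip sg rho" "sum_list sg = sum_list rho + (k - j)"
    by (auto simp: strips_added_def)
  define A where "A = interlace_lower mu sg"
  define B where "B = interlace_upper mu sg"
  define L where "L = length mu + length sg"
  define M where "M = max (part mu 0) (part sg 0)"
  define g where "g = box_reflect A B (part rho)"
  define F where "F = case_nat (sum_list mu + k - (\<Sum>i<L. g i)) g"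
  have L: "length mu \<le> L" "length sg \<le> L" by (simp_all add: L_def)
  have box: "part rho \<in> box A B"
    using horizontal_strips_iff_interlace_box rho(2) sg(2) unfolding A_def B_def by blast
  have sum_g: "sum_list rho + (\<Sum>i<L. g i) + M = sum_list mu + sum_list sg"
    using sum_list_interlace_box_reflect[OF rho(1)] box
    unfolding g_def A_def B_def L_def M_def by blast
  have F0: "F 0 = j + M" using sum_g sg(3) rho(3) j unfolding F_def by simp
  have F_Suc: "(\<lambda>i. F (Suc i)) \<in> interlace_box mu sg"
    using box_reflect_in_box[OF box] unfolding F_def g_def A_def B_def by simp
  have la: "la = partition_of_fun F"
    unfolding la_def strip_exchange_up_def F_def g_def A_def B_def L_def Let_def ..
  have M: "max (part mu 0) (part sg 0) \<le> F 0" using F0 M_def by simp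
  have la_part: "is_partition la" "part la = F"
    unfolding la using is_partition_of_shifted_interlace_box[OF mu M F_Suc]
      part_of_shifted_interlace_box[OF mu M F_Suc] by simp_all
  have strips: "horizontal_strip la mu \<and> horizontal_strip la sg"
    using horizontal_strips_over_iff_interlace_box la_part(2) M F_Suc by simp
  have "sum_list la = (\<Sum>i<Suc L. F i)"
    using sum_list_eq_sum_part horizontal_strip_length_Suc[OF la_part(1)] strips L la_part(2)
    by (metis Suc_le_mono le_trans)
  also have "\<dots> = sum_list mu + k"
    unfolding sum.lessThan_Suc_shift using sum_g sg(3) rho(3) j F0 by (simp add: F_def)
  finally have size: "sum_list la = sum_list mu + k" .
  show "la \<in> strips_added mu k" using la_part(1) strips size by (simp add: strips_added_def)
  show "sg \<in> strips_removed la e" using sg rho(3) la_part(1) strips size j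
    by (simp add: strips_removed_def)
  have "(\<lambda>i. part la (Suc i)) = g" using la_part(2) by (simp add: F_def)
  then show "strip_exchange_down mu sg la = rho"
    unfolding strip_exchange_down_def g_def A_def[symmetric] B_def[symmetric]
    using box_reflect_box_reflect[OF box] partition_of_fun_part[OF rho(1)] by simp
  show "e + sum_list rho - sum_list mu = j" using rho(3) j by linarith
qed


lemma
  assumes "is_partition mu" "horizontal_strip la mu" "horizontal_strip la sg"
  shows is_partition_strip_exchange_down: "is_partition (strip_exchange_down mu sg la)"
    and part_strip_exchange_down: "part (strip_exchange_down mu sg la)
      = box_reflect (interlace_lower mu sg) (interlace_upper mu sg) (\<lambda>i. part la (Suc i))"
proof -
  have "(\<lambda>i. part la (Suc i)) \<in> interlace_box mu sg"
    using horizontal_strips_over_iff_interlace_box assms(2,3) by blast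
  from box_reflect_in_box[OF this]
  show "is_partition (strip_exchange_down mu sg la)"
    and "part (strip_exchange_down mu sg la)
      = box_reflect (interlace_lower mu sg) (interlace_upper mu sg) (\<lambda>i. part la (Suc i))"
    unfolding strip_exchange_down_def
    by (simp_all add: is_partition_of_interlace_box[OF assms(1)] part_of_interlace_box[OF assms(1)])
qed

lemma sum_list_eq_part_0_add:
  assumes "length la \<le> Suc L"
  shows "sum_list la = part la 0 + (\<Sum>i<L. part la (Suc i))"
  using sum_list_eq_sum_part[OF assms] unfolding sum.lessThan_Suc_shift .

lemma strip_exchange_up_down:
  assumes mu: "is_partition mu" and la: "la \<in> strips_added mu k" and sg: "horizontal_strip la sg"
  shows "strip_exchange_up mu k sg (strip_exchange_down mu sg la) = la"
proof -
  from la have la: "is_partition la" "horizontal_strip la mu" "sum_list la = sum_list mu + k"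
    by (auto simp: strips_added_def)
  define A where "A = interlace_lower mu sg"
  define B where "B = interlace_upper mu sg"
  define L where "L = length mu + length sg"
  define h where "h = (\<lambda>i. part la (Suc i))"
  have box: "h \<in> box A B"
    using horizontal_strips_over_iff_interlace_box la(2) sg unfolding h_def A_def B_def by blast
  have reflect: "box_reflect A B (part (strip_exchange_down mu sg la)) = h"
    using part_strip_exchange_down[OF mu la(2) sg] box_reflect_box_reflect[OF box]
    unfolding A_def B_def h_def by simp
  have "length la \<le> Suc L" using horizontal_strip_length_Suc[OF la(1,2)] by (simp add: L_def)
  then have "sum_list la = part la 0 + (\<Sum>i<L. h i)" unfolding h_def by (rule sum_list_eq_part_0_add)
  then have "case_nat (sum_list mu + k - (\<Sum>i<L. h i)) h = part la"
    using la(3) by (auto simp: fun_eq_iff h_def split: nat.split)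
  then show ?thesis
    using partition_of_fun_part[OF la(1)] reflect
    unfolding strip_exchange_up_def Let_def A_def[symmetric] B_def[symmetric] L_def[symmetric] by simp
qed

lemma strip_exchange_down:
  assumes mu: "is_partition mu" and la: "la \<in> strips_added mu k" and sg: "sg \<in> strips_removed la e"
  defines "rho \<equiv> strip_exchange_down mu sg la"
  defines "j \<equiv> e + sum_list rho - sum_list mu"
  shows "j \<le> e" "j \<le> k" "rho \<in> strips_removed mu (e - j)" "sg \<in> strips_added rho (k - j)"
proof -
  from la have la: "is_partition la" "horizontal_strip la mu" "sum_list la = sum_list mu + k"
    by (auto simp: strips_added_def)
  from sg have sg: "is_partition sg" "horizontal_strip la sg" "sum_list sg + e = sum_list la"
    by (auto simp: strips_removed_def)
  define L where "L = length mu + length sg"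
  define M where "M = max (part mu 0) (part sg 0)"
  define h where "h = (\<lambda>i. part la (Suc i))"
  have M: "M \<le> part la 0" and box: "h \<in> interlace_box mu sg"
    using horizontal_strips_over_iff_interlace_box[of la mu sg] la(2) sg(2)
    unfolding M_def h_def by auto
  have rho: "is_partition rho" "part rho \<in> interlace_box mu sg"
    using is_partition_strip_exchange_down[OF mu la(2) sg(2)] part_strip_exchange_down[OF mu la(2) sg(2)]
      box_reflect_in_box[OF box] unfolding rho_def h_def by simp_all
  then have strips: "horizontal_strip mu rho \<and> horizontal_strip sg rho"
    using horizontal_strips_iff_interlace_box by blast
  have "length la \<le> Suc L" using horizontal_strip_length_Suc[OF la(1,2)] by (simp add: L_def)
  then have "sum_list la = part la 0 + (\<Sum>i<L. h i)" unfolding h_def by (rule sum_list_eq_part_0_add)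
  moreover have "sum_list rho + (\<Sum>i<L. h i) + M = sum_list mu + sum_list sg"
    using sum_list_interlace_box_reflect[OF rho] part_strip_exchange_down[OF mu la(2) sg(2)]
      box_reflect_box_reflect[OF box] unfolding rho_def L_def M_def h_def by simp
  ultimately have size: "sum_list rho + M + e = sum_list mu + part la 0"
    using la(3) sg(3) by linarith
  moreover have "sum_list rho \<le> sum_list mu" "sum_list rho \<le> sum_list sg"
    using horizontal_strip_sum_list_le[OF rho(1)] strips by auto
  moreover have "j = part la 0 - M" unfolding j_def using size by linarith
  ultimately have sizes: "j \<le> e" "j \<le> k" "sum_list rho + (e - j) = sum_list mu"
    "sum_list sg = sum_list rho + (k - j)"
    using M la(3) sg(3) by linarith+
  then show "j \<le> e" "j \<le> k" by simp_all
  show "rho \<in> strips_removed mu (e - j)" "sg \<in> strips_added rho (k - j)"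
    using rho(1) sg(1) strips sizes by (simp_all add: strips_removed_def strips_added_def)
qed

lemma sum_strips_exchange:
  assumes "is_partition mu"
  shows "(\<Sum>j | j \<le> e \<and> j \<le> k. \<Sum>rho\<in>strips_removed mu (e - j). \<Sum>sg\<in>strips_added rho (k - j). f sg)
       = (\<Sum>la\<in>strips_added mu k. \<Sum>sg\<in>strips_removed la e. f sg)"
proof -
  define J where "J = {j. j \<le> e \<and> j \<le> k}"
  have "finite J" unfolding J_def by (rule finite_subset[of _ "{..e}"]) auto
  note finite = this finite_strips_removed finite_strips_added
  have "(\<Sum>j\<in>J. \<Sum>rho\<in>strips_removed mu (e - j). \<Sum>sg\<in>strips_added rho (k - j). f sg)
      = (\<Sum>(j, rho, sg)\<in>(SIGMA j:J. SIGMA rho:strips_removed mu (e - j). strips_added rho (k - j)). f sg)"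
    by (simp add: sum.Sigma finite split_def)
  also have "\<dots> = (\<Sum>(la, sg)\<in>(SIGMA la:strips_added mu k. strips_removed la e). f sg)"
  proof (rule sum.reindex_bij_witness[where j = "\<lambda>(j, rho, sg). (strip_exchange_up mu k sg rho, sg)"
        and i = "\<lambda>(la, sg). (e + sum_list (strip_exchange_down mu sg la) - sum_list mu,
                              strip_exchange_down mu sg la, sg)"])
    fix a assume "a \<in> (SIGMA j:J. SIGMA rho:strips_removed mu (e - j). strips_added rho (k - j))"
    then obtain j rho sg where a: "a = (j, rho, sg)" "j \<le> e" "j \<le> k"
      "rho \<in> strips_removed mu (e - j)" "sg \<in> strips_added rho (k - j)"
      by (auto simp: J_def)
    note up = strip_exchange_up[OF assms a(2-5)]
    show "(\<lambda>(la, sg). (e + sum_list (strip_exchange_down mu sg la) - sum_list mu,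
            strip_exchange_down mu sg la, sg)) ((\<lambda>(j, rho, sg). (strip_exchange_up mu k sg rho, sg)) a) = a"
      using up a(1) by simp
    show "(\<lambda>(j, rho, sg). (strip_exchange_up mu k sg rho, sg)) a
        \<in> (SIGMA la:strips_added mu k. strips_removed la e)"
      using up a(1) by simp
  next
    fix b assume "b \<in> (SIGMA la:strips_added mu k. strips_removed la e)"
    then obtain la sg where b: "b = (la, sg)" "la \<in> strips_added mu k" "sg \<in> strips_removed la e"
      by auto
    note down = strip_exchange_down[OF assms b(2,3)]
      strip_exchange_up_down[OF assms b(2)] b(3)[unfolded strips_removed_def]
    show "(\<lambda>(j, rho, sg). (strip_exchange_up mu k sg rho, sg)) ((\<lambda>(la, sg).
        (e + sum_list (strip_exchange_down mu sg la) - sum_list mu, strip_exchange_down mu sg la, sg)) b) = b"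
      using down b(1) by simp
    show "(\<lambda>(la, sg). (e + sum_list (strip_exchange_down mu sg la) - sum_list mu,
            strip_exchange_down mu sg la, sg)) b
        \<in> (SIGMA j:J. SIGMA rho:strips_removed mu (e - j). strips_added rho (k - j))"
      using down b(1) by (simp add: J_def)
  qed auto
  also have "\<dots> = (\<Sum>la\<in>strips_added mu k. \<Sum>sg\<in>strips_removed la e. f sg)"
    by (simp add: sum.Sigma finite split_def)
  finally show ?thesis unfolding J_def .
qed

section \<open>The Pieri rule\<close>

definition mono_degree :: "mono \<Rightarrow> nat" where
  "mono_degree g = sum (Poly_Mapping.lookup g) (Poly_Mapping.keys g)"

definition submonos :: "mono \<Rightarrow> mono set" where
  "submonos a = {g. \<forall>i. Poly_Mapping.lookup g i \<le> Poly_Mapping.lookup a i}"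

lemma finite_submonos: "finite (submonos a)"
proof -
  let ?K = "Poly_Mapping.keys a" and ?B = "{..Max (Poly_Mapping.lookup a ` Poly_Mapping.keys a)}"
  have sub: "Poly_Mapping.lookup ` submonos a \<subseteq> {f. \<forall>x. (x \<in> ?K \<longrightarrow> f x \<in> ?B) \<and> (x \<notin> ?K \<longrightarrow> f x = 0)}"
  proof (intro subsetI CollectI allI conjI impI)
    fix f x assume "f \<in> Poly_Mapping.lookup ` submonos a"
    then have le: "f x \<le> Poly_Mapping.lookup a x" by (auto simp: submonos_def)
    show "x \<notin> ?K \<Longrightarrow> f x = 0" using le by (simp add: in_keys_iff)
    assume "x \<in> ?K"
    then have "Poly_Mapping.lookup a x \<le> Max (Poly_Mapping.lookup a ` ?K)" by (intro Max_ge) auto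
    then show "f x \<in> ?B" using le by simp
  qed
  have "finite {f. \<forall>x. (x \<in> ?K \<longrightarrow> f x \<in> ?B) \<and> (x \<notin> ?K \<longrightarrow> f x = (0::nat))}"
    by (rule finite_set_of_finite_funs) auto
  moreover have "inj_on Poly_Mapping.lookup (submonos a)" by (auto simp: inj_on_def poly_mapping_eqI)
  ultimately show ?thesis using finite_imageD[OF finite_subset[OF sub]] by blast
qed

lemma mono_degree_eq_sum:
  assumes "finite K" "Poly_Mapping.keys g \<subseteq> K"
  shows "mono_degree g = (\<Sum>i\<in>K. Poly_Mapping.lookup g i)"
  unfolding mono_degree_def by (rule sum.mono_neutral_left) (use assms in \<open>auto simp: in_keys_iff\<close>)

lemma mono_degree_add: "mono_degree (g + h) = mono_degree g + mono_degree h"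
proof -
  let ?K = "Poly_Mapping.keys g \<union> Poly_Mapping.keys h"
  have "Poly_Mapping.keys (g + h) \<subseteq> ?K" by (rule keys_add)
  then show ?thesis
    using mono_degree_eq_sum[of ?K] by (simp add: lookup_add sum.distrib)
qed

lemma mono_degree_single: "mono_degree (Poly_Mapping.single N j) = j"
  by (simp add: mono_degree_def)

lemma sf_mult_hcomp:
  "sf_mult f (hcomp k) a = (\<Sum>g | g \<in> submonos a \<and> mono_degree g = k. f (a - g))"
proof -
  have "sf_mult f (hcomp k) a = (\<Sum>g\<in>submonos a. f (a - g) * hcomp k g)"
    unfolding sf_mult_def
  proof (rule sum.reindex_bij_witness[where j = snd and i = "\<lambda>g. (a - g, g)"])
    fix p :: "mono \<times> mono" assume "p \<in> {p. fst p + snd p = a}"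
    then have a: "Poly_Mapping.lookup a i
        = Poly_Mapping.lookup (fst p) i + Poly_Mapping.lookup (snd p) i" for i
      by (auto simp: lookup_add)
    then have "a - snd p = fst p" by (auto intro!: poly_mapping_eqI simp: lookup_minus)
    then show "(a - snd p, snd p) = p" "f (a - snd p) * hcomp k (snd p) = f (fst p) * hcomp k (snd p)"
      by simp_all
    show "snd p \<in> submonos a" using a by (simp add: submonos_def)
  next
    fix g assume "g \<in> submonos a"
    then have "a - g + g = a"
      by (auto intro!: poly_mapping_eqI simp: lookup_minus lookup_add submonos_def)
    then show "(a - g, g) \<in> {p. fst p + snd p = a}" by simp
  qed simp
  also have "\<dots> = (\<Sum>g\<in>submonos a. if mono_degree g = k then f (a - g) else 0)"
    by (intro sum.cong refl) (simp add: hcomp_def mono_degree_def)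
  also have "\<dots> = (\<Sum>g | g \<in> submonos a \<and> mono_degree g = k. f (a - g))"
    by (rule sum.inter_filter[symmetric, OF finite_submonos])
  finally show ?thesis .
qed

lemma lookup_minus_single_lookup:
  "Poly_Mapping.lookup (g - Poly_Mapping.single N (Poly_Mapping.lookup g N)) i
     = (if i = N then 0 else Poly_Mapping.lookup g i)"
  by (simp add: lookup_minus lookup_single when_def)

lemma minus_single_lookup_in_submonos:
  "g \<in> submonos a \<Longrightarrow>
     g - Poly_Mapping.single N (Poly_Mapping.lookup g N)
       \<in> submonos (a - Poly_Mapping.single N (Poly_Mapping.lookup a N))"
  by (simp add: submonos_def lookup_minus_single_lookup)

lemma add_single_in_submonos:
  assumes "g \<in> submonos (a - Poly_Mapping.single N (Poly_Mapping.lookup a N))"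
    and "j \<le> Poly_Mapping.lookup a N"
  shows "g + Poly_Mapping.single N j \<in> submonos a"
  unfolding submonos_def
proof (intro CollectI allI)
  fix i
  have "Poly_Mapping.lookup g i
      \<le> Poly_Mapping.lookup (a - Poly_Mapping.single N (Poly_Mapping.lookup a N)) i"
    using assms(1) unfolding submonos_def by blast
  then have "Poly_Mapping.lookup g i \<le> (if i = N then 0 else Poly_Mapping.lookup a i)"
    by (simp only: lookup_minus_single_lookup)
  then show "Poly_Mapping.lookup (g + Poly_Mapping.single N j) i \<le> Poly_Mapping.lookup a i"
    using assms(2) by (cases "i = N") (simp_all add: lookup_add lookup_single)
qed

lemma sum_submonos_split:
  fixes a :: mono and N :: nat
  defines "e \<equiv> Poly_Mapping.lookup a N"
  defines "a' \<equiv> a - Poly_Mapping.single N e"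
  shows "(\<Sum>g | g \<in> submonos a \<and> mono_degree g = k. F g)
       = (\<Sum>j | j \<le> e \<and> j \<le> k.
            \<Sum>g' | g' \<in> submonos a' \<and> mono_degree g' = k - j. F (g' + Poly_Mapping.single N j))"
proof -
  define J where "J = {j. j \<le> e \<and> j \<le> k}"
  let ?G = "\<lambda>k. {g. g \<in> submonos a' \<and> mono_degree g = k}"
  let ?remove = "\<lambda>g. g - Poly_Mapping.single N (Poly_Mapping.lookup g N)"
  have "finite J" unfolding J_def by (rule finite_subset[of _ "{..e}"]) auto
  have add_remove: "?remove g + Poly_Mapping.single N (Poly_Mapping.lookup g N) = g" for g
    by (rule poly_mapping_eqI) (simp add: lookup_add lookup_minus lookup_single when_def)
  have "(\<Sum>j\<in>J. \<Sum>g'\<in>?G (k - j). F (g' + Poly_Mapping.single N j))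
      = (\<Sum>(j, g')\<in>(SIGMA j:J. ?G (k - j)). F (g' + Poly_Mapping.single N j))"
    by (rule sum.Sigma) (use \<open>finite J\<close> finite_submonos in auto)
  also have "\<dots> = (\<Sum>g | g \<in> submonos a \<and> mono_degree g = k. F g)"
  proof (rule sum.reindex_bij_witness[where j = "\<lambda>(j, g'). g' + Poly_Mapping.single N j"
        and i = "\<lambda>g. (Poly_Mapping.lookup g N, ?remove g)"])
    fix p assume "p \<in> (SIGMA j:J. ?G (k - j))"
    then obtain j g' where p: "p = (j, g')" "j \<le> e" "j \<le> k" "g' \<in> submonos a'" "mono_degree g' = k - j"
      by (auto simp: J_def)
    have "Poly_Mapping.lookup g' N \<le> Poly_Mapping.lookup a' N"
      using p(4) unfolding submonos_def by blast
    then have "Poly_Mapping.lookup g' N = 0"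
      unfolding a'_def e_def lookup_minus_single_lookup by simp
    then show "(\<lambda>g. (Poly_Mapping.lookup g N, ?remove g)) ((\<lambda>(j, g'). g' + Poly_Mapping.single N j) p) = p"
      using p(1) by (auto intro!: poly_mapping_eqI simp: lookup_add lookup_minus lookup_single when_def)
    show "(\<lambda>(j, g'). g' + Poly_Mapping.single N j) p \<in> {g. g \<in> submonos a \<and> mono_degree g = k}"
      using add_single_in_submonos p unfolding a'_def e_def
      by (simp add: mono_degree_add mono_degree_single)
  next
    fix g assume g: "g \<in> {g. g \<in> submonos a \<and> mono_degree g = k}"
    have "mono_degree g = mono_degree (?remove g) + Poly_Mapping.lookup g N"
      by (subst add_remove[symmetric, of g]) (simp add: mono_degree_add mono_degree_single)
    moreover have "Poly_Mapping.lookup g N \<le> e" using g by (simp add: submonos_def e_def)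
    ultimately show "(\<lambda>g. (Poly_Mapping.lookup g N, ?remove g)) g \<in> (SIGMA j:J. ?G (k - j))"
      using g minus_single_lookup_in_submonos unfolding J_def a'_def e_def by auto
    show "(\<lambda>(j, g'). g' + Poly_Mapping.single N j) ((\<lambda>g. (Poly_Mapping.lookup g N, ?remove g)) g) = g"
      using add_remove by simp
  qed auto
  finally show ?thesis unfolding J_def by simp
qed

lemma card_ssyts_0:
  assumes "is_partition la"
  shows "card (ssyts la 0) = (if la = [] then 1 else 0)"
proof (cases "la = []")
  case True
  then have "ssyts la 0 = {\<lambda>_. 0}" by (auto simp: ssyts_def is_ssyt_def cells_def)
  then show ?thesis using True by simp
next
  case False
  then have "(0, 0) \<in> cells la" using part_pos_iff[OF assms, of 0] by (simp add: cells_eq_part)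
  then have "ssyts la 0 = {}" using ssyts_entry_in_keys by fastforce
  then show ?thesis using False by simp
qed

lemma Nil_in_strips_added_iff:
  assumes "is_partition mu"
  shows "[] \<in> strips_added mu k \<longleftrightarrow> mu = [] \<and> k = 0"
proof
  assume "[] \<in> strips_added mu k"
  then have "sum_list mu = 0" "k = 0" by (simp_all add: strips_added_def)
  then have "length mu = 0" "k = 0" using length_le_sum_list[OF assms] by linarith+
  then show "mu = [] \<and> k = 0" by simp
qed (simp add: strips_added_def is_partition_def horizontal_strip_def part_def)

lemma sum_card_ssyts_submonos_0:
  assumes "is_partition mu"
  shows "(\<Sum>g | g \<in> submonos 0 \<and> mono_degree g = k. card (ssyts mu (0 - g)))
       = (\<Sum>la\<in>strips_added mu k. card (ssyts la 0))"
proof -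
  have "{g. g \<in> submonos 0 \<and> mono_degree g = k} = (if k = 0 then {0} else {})"
    by (auto simp: submonos_def mono_degree_def intro!: poly_mapping_eqI)
  then have "(\<Sum>g | g \<in> submonos 0 \<and> mono_degree g = k. card (ssyts mu (0 - g)))
      = (if mu = [] \<and> k = 0 then 1 else 0)"
    using card_ssyts_0[OF assms] by auto
  also have "\<dots> = (\<Sum>la\<in>strips_added mu k. if la = [] then 1 else 0)"
    using Nil_in_strips_added_iff[OF assms] by (simp add: sum.delta finite_strips_added)
  also have "\<dots> = (\<Sum>la\<in>strips_added mu k. card (ssyts la 0))"
    using card_ssyts_0 by (intro sum.cong) (auto simp: strips_added_def)
  finally show ?thesis .
qed

lemma card_ssyts_minus_remove_largest:
  fixes a :: mono
  assumes "is_partition rho" "\<forall>i>N. Poly_Mapping.lookup a i = 0"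
    and "g \<in> submonos (a - Poly_Mapping.single N (Poly_Mapping.lookup a N))"
  shows "card (ssyts rho (a - (g + Poly_Mapping.single N j)))
      = (\<Sum>sg\<in>strips_removed rho (Poly_Mapping.lookup a N - j).
           card (ssyts sg (a - Poly_Mapping.single N (Poly_Mapping.lookup a N) - g)))"
proof -
  let ?a' = "a - Poly_Mapping.single N (Poly_Mapping.lookup a N)"
  let ?b = "a - (g + Poly_Mapping.single N j)"
  have "Poly_Mapping.lookup g N \<le> Poly_Mapping.lookup ?a' N"
    using assms(3) by (simp add: submonos_def)
  then have "Poly_Mapping.lookup g N = 0" by (simp add: lookup_minus_single_lookup)
  then have "Poly_Mapping.lookup ?b N = Poly_Mapping.lookup a N - j"
    and "Poly_Mapping.lookup (?a' - g) = (\<lambda>i. if i = N then 0 else Poly_Mapping.lookup ?b i)"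
    by (auto simp: fun_eq_iff lookup_minus lookup_add lookup_single when_def)
  moreover have "\<forall>i>N. Poly_Mapping.lookup ?b i = 0" using assms(2) by (simp add: lookup_minus)
  ultimately show ?thesis using card_ssyts_remove_largest[OF assms(1)] by simp
qed

text \<open>The Pieri rule on tableaux, by induction on the number of variables: removing the
  largest entry \<open>N\<close> of the tableaux on both sides leads to the exchange of strips.\<close>

lemma sum_card_ssyts_submonos:
  assumes "is_partition mu" "\<forall>i\<ge>N. Poly_Mapping.lookup a i = 0"
  shows "(\<Sum>g | g \<in> submonos a \<and> mono_degree g = k. card (ssyts mu (a - g)))
       = (\<Sum>la\<in>strips_added mu k. card (ssyts la a))"
  using assms
proof (induction N arbitrary: a mu k)
  case 0
  then have "a = 0" by (intro poly_mapping_eqI) simp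
  then show ?case using sum_card_ssyts_submonos_0[OF 0(1)] by simp
next
  case (Suc N)
  define e where "e = Poly_Mapping.lookup a N"
  define a' where "a' = a - Poly_Mapping.single N e"
  have a_vanishes: "\<forall>i>N. Poly_Mapping.lookup a i = 0" using Suc.prems(2) by simp
  have a': "Poly_Mapping.lookup a' i = (if i = N then 0 else Poly_Mapping.lookup a i)" for i
    by (simp add: a'_def e_def lookup_minus lookup_single when_def)
  then have a'_eq: "Poly_Mapping.lookup a' = (\<lambda>i. if i = N then 0 else Poly_Mapping.lookup a i)" ..
  have IH: "(\<Sum>g' | g' \<in> submonos a' \<and> mono_degree g' = k'. card (ssyts rho (a' - g')))
      = (\<Sum>sg\<in>strips_added rho k'. card (ssyts sg a'))" if "is_partition rho" for rho k'
    using Suc.IH[OF that] a' Suc.prems(2) by (simp add: not_less_eq_eq)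
  have "(\<Sum>g | g \<in> submonos a \<and> mono_degree g = k. card (ssyts mu (a - g)))
      = (\<Sum>j | j \<le> e \<and> j \<le> k. \<Sum>g' | g' \<in> submonos a' \<and> mono_degree g' = k - j.
           card (ssyts mu (a - (g' + Poly_Mapping.single N j))))"
    unfolding e_def a'_def by (rule sum_submonos_split)
  also have "\<dots> = (\<Sum>j | j \<le> e \<and> j \<le> k. \<Sum>g' | g' \<in> submonos a' \<and> mono_degree g' = k - j.
           \<Sum>rho\<in>strips_removed mu (e - j). card (ssyts rho (a' - g')))"
    using card_ssyts_minus_remove_largest[OF Suc.prems(1) a_vanishes]
    unfolding a'_def e_def by simp
  also have "\<dots> = (\<Sum>j | j \<le> e \<and> j \<le> k. \<Sum>rho\<in>strips_removed mu (e - j).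
           \<Sum>g' | g' \<in> submonos a' \<and> mono_degree g' = k - j. card (ssyts rho (a' - g')))"
    by (intro sum.cong refl sum.swap)
  also have "\<dots> = (\<Sum>j | j \<le> e \<and> j \<le> k. \<Sum>rho\<in>strips_removed mu (e - j).
           \<Sum>sg\<in>strips_added rho (k - j). card (ssyts sg a'))"
    using IH by (intro sum.cong refl) (simp add: strips_removed_def)
  also have "\<dots> = (\<Sum>la\<in>strips_added mu k. \<Sum>sg\<in>strips_removed la e. card (ssyts sg a'))"
    by (rule sum_strips_exchange[OF Suc.prems(1)])
  also have "\<dots> = (\<Sum>la\<in>strips_added mu k. card (ssyts la a))"
    using card_ssyts_remove_largest[OF _ a'_eq a_vanishes]
    by (intro sum.cong refl) (simp add: strips_added_def e_def)
  finally show ?case .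
qed

theorem schur_mult_hcomp:
  assumes "is_partition mu"
  shows "sf_mult (schur mu) (hcomp k) = (\<Sum>la\<in>strips_added mu k. schur la)"
proof
  fix a :: mono
  obtain N where "Poly_Mapping.keys a \<subseteq> {..<N}"
    using finite_nat_set_iff_bounded by (metis finite_keys lessThan_iff subsetI)
  then have a: "\<forall>i\<ge>N. Poly_Mapping.lookup a i = 0" by (auto simp: in_keys_iff)
  have "sf_mult (schur mu) (hcomp k) a
      = int (\<Sum>g | g \<in> submonos a \<and> mono_degree g = k. card (ssyts mu (a - g)))"
    by (simp add: sf_mult_hcomp schur_eq_card_ssyts)
  also have "\<dots> = (\<Sum>la\<in>strips_added mu k. schur la a)"
    by (simp add: sum_card_ssyts_submonos[OF assms a] schur_eq_card_ssyts)
  finally show "sf_mult (schur mu) (hcomp k) a = (\<Sum>la\<in>strips_added mu k. schur la) a"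
    by (simp add: sum_fun_apply)
qed

section \<open>Schur expansion of \<open>SF\<^sub>d\<close>\<close>

definition SF_coeff :: "nat \<Rightarrow> nat \<Rightarrow> nat \<Rightarrow> nat list \<times> nat list \<Rightarrow> int" where
  "SF_coeff n m d p =
     (if p \<in> partitions_of n \<times> partitions_of m then int (common_strip_count (fst p) (snd p) d) else 0)"

lemma finite_SF_coeff: "finite {p. SF_coeff n m d p \<noteq> 0}"
  by (rule finite_subset[of _ "partitions_of n \<times> partitions_of m"])
    (auto simp: SF_coeff_def finite_partitions_of split: if_splits)

lemma strips_added_partitions_of:
  assumes "mu \<in> partitions_of d" "d \<le> n"
  shows "strips_added mu (n - d) = {la \<in> partitions_of n. horizontal_strip la mu}"
  using assms by (auto simp: strips_added_def partitions_of_def)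

lemma SF_eq_schur_expand:
  assumes "d \<le> n" "d \<le> m"
  shows "SF n m d = schur_expand (SF_coeff n m d)"
proof
  fix x :: "mono \<times> mono"
  obtain a b where x: "x = (a, b)" by (cases x)
  let ?Pn = "partitions_of n" and ?Pm = "partitions_of m" and ?Pd = "partitions_of d"
  let ?strip = "\<lambda>la nu mu. if horizontal_strip la mu \<and> horizontal_strip nu mu then 1 else 0 :: int"
  have finite: "finite ?Pn" "finite ?Pm" "finite ?Pd" by (simp_all add: finite_partitions_of)
  have count: "(\<Sum>mu\<in>?Pd. ?strip la nu mu) = int (common_strip_count la nu d)" for la nu
    unfolding common_strip_count_def by (simp add: sum.inter_filter[OF finite(3), symmetric])
  have "SF n m d x = (\<Sum>mu\<in>?Pd. (\<Sum>la\<in>strips_added mu (n - d). schur la a)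
      * (\<Sum>nu\<in>strips_added mu (m - d). schur nu b))"
    unfolding SF_def sum_fun_apply x using schur_mult_hcomp
    by (intro sum.cong refl) (auto simp: sf_tensor_def partitions_of_def sum_fun_apply)
  also have "\<dots> = (\<Sum>mu\<in>?Pd. (\<Sum>la\<in>?Pn. if horizontal_strip la mu then schur la a else 0)
      * (\<Sum>nu\<in>?Pm. if horizontal_strip nu mu then schur nu b else 0))"
    using strips_added_partitions_of assms finite by (intro sum.cong refl) (simp add: sum.inter_filter)
  also have "\<dots> = (\<Sum>mu\<in>?Pd. \<Sum>la\<in>?Pn. \<Sum>nu\<in>?Pm. ?strip la nu mu * (schur la a * schur nu b))"
    unfolding sum_product by (intro sum.cong refl) simp
  also have "\<dots> = (\<Sum>la\<in>?Pn. \<Sum>nu\<in>?Pm. \<Sum>mu\<in>?Pd. ?strip la nu mu * (schur la a * schur nu b))"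
    by (subst sum.swap) (intro sum.cong refl sum.swap)
  also have "\<dots> = (\<Sum>la\<in>?Pn. \<Sum>nu\<in>?Pm. (\<Sum>mu\<in>?Pd. ?strip la nu mu) * (schur la a * schur nu b))"
    by (simp only: sum_distrib_right)
  also have "\<dots> = (\<Sum>p\<in>?Pn \<times> ?Pm. SF_coeff n m d p * sf_tensor (schur (fst p)) (schur (snd p)) x)"
    unfolding count sum.cartesian_product
    by (intro sum.cong refl) (auto simp: SF_coeff_def sf_tensor_def x)
  also have "\<dots> = schur_expand (SF_coeff n m d) x"
    by (rule schur_expand_eq_sum[symmetric]) (auto simp: finite SF_coeff_def split: if_splits)
  finally show "SF n m d x = schur_expand (SF_coeff n m d) x" .
qed

lemma sum_backward_differences:
  fixes c :: "nat \<Rightarrow> 'a::ab_group_add"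
  shows "(\<Sum>d\<le>D. c d - (if d = 0 then 0 else c (d - 1))) = c D"
  by (induction D) auto

text \<open>The differences with \<open>N - d - r < M\<close> are dropped: they either do not occur, or form a
  tail of the telescoping sum which the symmetry \<open>c d = c (S - d)\<close> turns into \<open>c r\<close>.\<close>

lemma sum_truncated_backward_differences:
  fixes c :: "nat \<Rightarrow> 'a::ab_group_add"
  assumes "2 * r \<le> N" "S + M = N"
    and symmetric: "\<And>d. d \<le> S \<Longrightarrow> c d = c (S - d)" and vanishing: "\<And>d. S < d \<Longrightarrow> c d = 0"
  shows "(\<Sum>d\<le>r. if M \<le> N - d - r then c d - (if d = 0 then 0 else c (d - 1)) else 0) = c r"
proof -
  let ?\<Delta> = "\<lambda>d. c d - (if d = 0 then 0 else c (d - 1))"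
  consider "M + 2 * r \<le> N" | "M + r \<le> N" "N < M + 2 * r" | "N < M + r" by linarith
  then show ?thesis
  proof cases
    case 1
    then have "(\<Sum>d\<le>r. if M \<le> N - d - r then ?\<Delta> d else 0) = (\<Sum>d\<le>r. ?\<Delta> d)"
      by (intro sum.cong) auto
    then show ?thesis by (simp add: sum_backward_differences)
  next
    case 2
    define D where "D = N - M - r"
    have D: "D < r" "D = S - r" "r \<le> S" using 2 assms(2) unfolding D_def by auto
    have "(\<Sum>d\<le>r. if M \<le> N - d - r then ?\<Delta> d else 0) = (\<Sum>d\<le>D. ?\<Delta> d)"
      by (rule sum.mono_neutral_cong_right) (use 2 D D_def assms(1) in auto)
    then show ?thesis using symmetric[OF D(3)] D by (simp add: sum_backward_differences)
  next
    case 3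
    then have "c r = 0" using assms(2) vanishing by simp
    moreover have "(\<Sum>d\<le>r. if M \<le> N - d - r then ?\<Delta> d else 0) = 0"
      using 3 assms(1) by (intro sum.neutral) auto
    ultimately show ?thesis by simp
  qed
qed

lemma SF_coeff_eq_sum_truncated_differences:
  assumes "r \<le> min m n"
  shows "SF_coeff n m r p =
    (\<Sum>d\<le>r. if first_part (fst p) \<le> n + m - d - r \<and> first_part (snd p) \<le> n + m - d - r
            then SF_coeff n m d p - (if d = 0 then 0 else SF_coeff n m (d - 1) p) else 0)"
proof (cases "p \<in> partitions_of n \<times> partitions_of m")
  case False
  then have zero: "SF_coeff n m d p = 0" for d unfolding SF_coeff_def by (rule if_not_P)
  have "(\<Sum>d\<le>r. if first_part (fst p) \<le> n + m - d - r \<and> first_part (snd p) \<le> n + m - d - r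
      then SF_coeff n m d p - (if d = 0 then 0 else SF_coeff n m (d - 1) p) else 0) = 0"
    by (intro sum.neutral) (simp add: zero)
  then show ?thesis by (simp add: zero)
next
  case True
  then obtain la nu where p: "p = (la, nu)" "is_partition la" "sum_list la = n"
    "is_partition nu" "sum_list nu = m"
    by (auto simp: partitions_of_def)
  define M where "M = max (part la 0) (part nu 0)"
  define S where "S = sum_list la + sum_list nu - M"
  define c where "c d = int (common_strip_count la nu d)" for d
  have "S + M = n + m"
    using part_0_le_sum_list[of la] part_0_le_sum_list[of nu] p unfolding S_def M_def by linarith
  moreover have "c d = c (S - d)" if "d \<le> S" for d
    using common_strip_count_symmetric[OF p(2)] that unfolding c_def S_def M_def by simp
  moreover have "c d = 0" if "S < d" for d
    using common_strip_count_eq_0[OF p(2)] that unfolding c_def S_def M_def by simp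
  moreover have "2 * r \<le> n + m" using assms by simp
  ultimately have
    "(\<Sum>d\<le>r. if M \<le> n + m - d - r then c d - (if d = 0 then 0 else c (d - 1)) else 0) = c r"
    by (intro sum_truncated_backward_differences)
  moreover have "SF_coeff n m d p = c d" for d using True by (simp add: SF_coeff_def p(1) c_def)
  moreover have "first_part (fst p) \<le> X \<and> first_part (snd p) \<le> X \<longleftrightarrow> M \<le> X" for X
    by (simp add: p(1) M_def first_part_eq_part)
  ultimately show ?thesis by (simp cong: if_cong)
qed

theorem mainTheorem4:
  fixes n m r :: nat
  assumes "0 < n" and "0 < m" and "r \<le> min m n"
  shows "SF n m r =
    (\<Sum>d\<le>r. trunc (n + m - d - r) (SF n m d - (if d = 0 then 0 else SF n m (d - 1))))"
proof -
  define \<Delta> where "\<Delta> d = (\<lambda>p. SF_coeff n m d p - (if d = 0 then 0 else SF_coeff n m (d - 1) p))" for d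
  define trunc_\<Delta> where "trunc_\<Delta> d =
    (\<lambda>p. if first_part (fst p) \<le> n + m - d - r \<and> first_part (snd p) \<le> n + m - d - r then \<Delta> d p else 0)"
    for d
  have SF: "SF n m d = schur_expand (SF_coeff n m d)" if "d \<le> r" for d
    using SF_eq_schur_expand that assms(3) by simp
  have "SF n m d - (if d = 0 then 0 else SF n m (d - 1)) = schur_expand (\<Delta> d)" if "d \<le> r" for d
    using SF[OF that] SF[of "d - 1"] that
    by (cases "d = 0") (simp_all add: \<Delta>_def schur_expand_diff[OF finite_SF_coeff finite_SF_coeff])
  moreover have "partition_coeffs (\<Delta> d)" "partition_coeffs (trunc_\<Delta> d)" for d
    by (rule partition_coeffsI[of _ n m], auto simp: trunc_\<Delta>_def \<Delta>_def SF_coeff_def)+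
  ultimately have "trunc (n + m - d - r) (SF n m d - (if d = 0 then 0 else SF n m (d - 1)))
      = schur_expand (trunc_\<Delta> d)" if "d \<le> r" for d
    using that trunc_schur_expand by (simp add: trunc_\<Delta>_def)
  then have "(\<Sum>d\<le>r. trunc (n + m - d - r) (SF n m d - (if d = 0 then 0 else SF n m (d - 1))))
      = (\<Sum>d\<le>r. schur_expand (trunc_\<Delta> d))" by simp
  also have "\<dots> = schur_expand (\<lambda>p. \<Sum>d\<le>r. trunc_\<Delta> d p)"
    using \<open>partition_coeffs (trunc_\<Delta> _)\<close>
    by (intro schur_expand_sum[symmetric]) (auto simp: partition_coeffs_def)
  also have "(\<lambda>p. \<Sum>d\<le>r. trunc_\<Delta> d p) = SF_coeff n m r"
    using SF_coeff_eq_sum_truncated_differences[OF assms(3)]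
    by (simp add: fun_eq_iff trunc_\<Delta>_def \<Delta>_def cong: if_cong)
  finally show ?thesis using SF[OF order_refl] by (simp only:)
qed

end
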